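(* Let $\beta\in\ell^2\cap[0,1]^{\mathbb{N}}$ and $P\in\mathcal{P}$. If $\nu:\mathcal{P}\to\mathcal{H}$ is pathwise differentiable at $P$, then $\nu^\beta:=\Gamma_\beta\circ\nu$ is pathwise differentiable at $P$ with local parameter $\dot{\nu}_P^\beta=\Gamma_\beta\circ\dot{\nu}_P$ and efficient influence function $\phi_P^\beta\in L^2(P;\mathcal{H})$.
   Context: Let $(\mathcal{Z},\mathbf{B})$ be a Polish space, $\mathcal{P}$ a model of distributions dominated by a $\sigma$-finite measure $\lambda$, $\mathcal{H}$ a real separable Hilbert space with orthonormal basis $(h_k)_{k\ge1}$ (padded with zeros if finite-dimensional). For $P\in\mathcal{P}$, $s\in L^2(P)$, $\mathscr{P}(P,\mathcal{P},s)$ is the set of submodels $\{P_\epsilon:\epsilon\in[0,\delta)\}\subset\mathcal{P}$ with $\|p_\epsilon^{1/2}-p^{1/2}-\epsilon sp^{1/2}/2\|_{L^2(\lambda)}=o(\epsilon)$; tangent set $\{s:\mathscr{P}(P,\mathcal{P},s)\ne\emptyset\}$, tangent space $\dot{\mathcal{P}}_P$ its closed linear span. A map $\mu:\mathcal{P}\to\mathcal{H}$ is pathwise differentiable at $P$ with local parameter $\dot{\mu}_P$ if $\dot{\mu}_P:\dot{\mathcal{P}}_P\to\mathcal{H}$ is continuous linear and $\|\mu(P_\epsilon)-\mu(P)-\epsilon\dot{\mu}_P(s)\|_{\mathcal{H}}=o(\epsilon)$ for every tangent-set $s$ and every submodel in $\mathscr{P}(P,\mathcal{P},s)$; the adjoint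 $\dot{\mu}_P^*$ is the efficient influence operator, and $\phi:\mathcal{Z}\to\mathcal{H}$ is an efficient influence function of $\mu$ at $P$ if $\dot{\mu}_P^*(h)(z)=\langle h,\phi(z)\rangle_{\mathcal{H}}$ for all $h\in\mathcal{H}$ and all $z$ in a $P$-probability-one set. $\Gamma_\beta:\mathcal{H}\to\mathcal{H}$, $\Gamma_\beta(h)=\sum_k\beta_k\langle h,h_k\rangle_{\mathcal{H}}h_k$. $\phi_P^\beta(z)=\sum_k\beta_k\dot{\nu}_P^*(h_k)(z)h_k$. $L^2(P;\mathcal{H})$: Bochner measurable $f$ with $\int\|f\|_{\mathcal{H}}^2dP<\infty$. *)

theory Defs
  imports "HOL-Probability.Probability"
begin

definition dominated_model :: "'z measure \<Rightarrow> 'z measure set \<Rightarrow> bool" where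
  "dominated_model lam model \<longleftrightarrow>
     (\<forall>P\<in>model. prob_space P \<and> sets P = sets lam \<and> absolutely_continuous lam P)"

definition rdens :: "'z measure \<Rightarrow> 'z measure \<Rightarrow> 'z \<Rightarrow> real" where
  "rdens lam P z = sqrt (enn2real (RN_deriv lam P z))"

definition L2 :: "'z measure \<Rightarrow> ('z \<Rightarrow> real) set" where
  "L2 P = {f. f \<in> borel_measurable P \<and> integrable P (\<lambda>z. (f z)^2)}"

text \<open>L^2(P;H): Bochner (= Borel, H separable) measurable, square integrable norm.\<close>
definition L2H :: "'z measure \<Rightarrow> ('z \<Rightarrow> 'h::{real_normed_vector,second_countable_topology}) set" where
  "L2H P = {f. f \<in> borel_measurable P \<and> integrable P (\<lambda>z. (norm (f z))^2)}"

text \<open>Orthonormal basis of H padded with zeros (the zeros form a tail).\<close>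
definition onb_padded :: "(nat \<Rightarrow> 'h::real_inner) \<Rightarrow> bool" where
  "onb_padded hs \<longleftrightarrow>
     (\<forall>k. hs k = 0 \<or> norm (hs k) = 1) \<and>
     (\<forall>j k. j \<noteq> k \<longrightarrow> inner (hs j) (hs k) = 0) \<and>
     (\<forall>j k. j \<le> k \<longrightarrow> hs k \<noteq> 0 \<longrightarrow> hs j \<noteq> 0) \<and>
     closure (span (range hs)) = UNIV"

text \<open>Submodels through P with score s: families P_eps, eps in [0,delta), in the model with
  || p_eps^(1/2) - p^(1/2) - eps s p^(1/2)/2 ||_{L2(lam)} = o(eps) as eps -> 0+.\<close>
definition submodels :: "'z measure \<Rightarrow> 'z measure set \<Rightarrow> 'z measure \<Rightarrow> ('z \<Rightarrow> real)
    \<Rightarrow> (real \<Rightarrow> 'z measure) set" where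
  "submodels lam model P s = {Pe. \<exists>\<delta>>0. (\<forall>\<epsilon>\<in>{0..<\<delta>}. Pe \<epsilon> \<in> model) \<and>
     (\<forall>e>0. eventually (\<lambda>\<epsilon>.
        (\<integral>\<^sup>+ z. ennreal ((rdens lam (Pe \<epsilon>) z - rdens lam P z - \<epsilon> * s z * rdens lam P z / 2)^2) \<partial>lam)
          \<le> ennreal ((e * \<epsilon>)^2)) (at_right 0))}"

definition tangent_set :: "'z measure \<Rightarrow> 'z measure set \<Rightarrow> 'z measure \<Rightarrow> ('z \<Rightarrow> real) set" where
  "tangent_set lam model P = {s \<in> L2 P. submodels lam model P s \<noteq> {}}"

definition lin_span :: "('z \<Rightarrow> real) set \<Rightarrow> ('z \<Rightarrow> real) set" where
  "lin_span S = {t. \<exists>F c. finite F \<and> F \<subseteq> S \<and> t = (\<lambda>z. \<Sum>f\<in>F. c f * f z)}"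

definition tangent_space :: "'z measure \<Rightarrow> 'z measure set \<Rightarrow> 'z measure \<Rightarrow> ('z \<Rightarrow> real) set" where
  "tangent_space lam model P = {s \<in> L2 P. \<forall>e>0. \<exists>t\<in>lin_span (tangent_set lam model P).
      (\<integral>z. (s z - t z)^2 \<partial>P) < e}"

definition cont_linear_on :: "'z measure \<Rightarrow> ('z \<Rightarrow> real) set \<Rightarrow> (('z \<Rightarrow> real) \<Rightarrow> 'h::real_normed_vector) \<Rightarrow> bool" where
  "cont_linear_on P T D \<longleftrightarrow>
     (\<forall>s\<in>T. \<forall>t\<in>T. D (\<lambda>z. s z + t z) = D s + D t) \<and>
     (\<forall>a. \<forall>s\<in>T. D (\<lambda>z. a * s z) = a *\<^sub>R D s) \<and>
     (\<exists>C. \<forall>s\<in>T. norm (D s) \<le> C * sqrt (\<integral>z. (s z)^2 \<partial>P))"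

definition pathwise_diff :: "'z measure \<Rightarrow> 'z measure set \<Rightarrow> ('z measure \<Rightarrow> 'h::real_normed_vector)
    \<Rightarrow> 'z measure \<Rightarrow> (('z \<Rightarrow> real) \<Rightarrow> 'h) \<Rightarrow> bool" where
  "pathwise_diff lam model mu P D \<longleftrightarrow>
     cont_linear_on P (tangent_space lam model P) D \<and>
     (\<forall>s\<in>tangent_set lam model P. \<forall>Pe\<in>submodels lam model P s.
        \<forall>e>0. eventually (\<lambda>\<epsilon>. norm (mu (Pe \<epsilon>) - mu P - \<epsilon> *\<^sub>R D s) \<le> e * \<epsilon>) (at_right 0))"

text \<open>Efficient influence operator: the adjoint D^* : H \<rightarrow> tangent space, i.e. D^*(h) is
  an element of the tangent space with <D s, h>_H = <s, D^* h>_{L2(P)} for all s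
  in the tangent space (a representative chosen by Hilbert choice; unique up to P-null sets).\<close>
definition eff_infl_op :: "'z measure \<Rightarrow> 'z measure set \<Rightarrow> 'z measure \<Rightarrow> (('z \<Rightarrow> real) \<Rightarrow> 'h::real_inner)
    \<Rightarrow> 'h \<Rightarrow> 'z \<Rightarrow> real" where
  "eff_infl_op lam model P D h = (SOME f. f \<in> tangent_space lam model P \<and>
      (\<forall>s\<in>tangent_space lam model P. inner (D s) h = (\<integral>z. s z * f z \<partial>P)))"

definition is_eif :: "'z measure \<Rightarrow> 'z measure set \<Rightarrow> 'z measure \<Rightarrow> (('z \<Rightarrow> real) \<Rightarrow> 'h::real_inner)
    \<Rightarrow> ('z \<Rightarrow> 'h) \<Rightarrow> bool" where
  "is_eif lam model P D \<phi> \<longleftrightarrow>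
     (\<forall>h. AE z in P. eff_infl_op lam model P D h z = inner h (\<phi> z))"

definition Gamma_beta :: "(nat \<Rightarrow> real) \<Rightarrow> (nat \<Rightarrow> 'h::real_inner) \<Rightarrow> 'h \<Rightarrow> 'h" where
  "Gamma_beta beta hs x = (\<Sum>k. (beta k * inner x (hs k)) *\<^sub>R hs k)"

definition phi_beta :: "'z measure \<Rightarrow> 'z measure set \<Rightarrow> 'z measure \<Rightarrow> (('z \<Rightarrow> real) \<Rightarrow> 'h::real_inner)
    \<Rightarrow> (nat \<Rightarrow> real) \<Rightarrow> (nat \<Rightarrow> 'h) \<Rightarrow> 'z \<Rightarrow> 'h" where
  "phi_beta lam model P D beta hs z = (\<Sum>k. (beta k * eff_infl_op lam model P D (hs k) z) *\<^sub>R hs k)"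

end

theory Submission
  imports Defs
begin

text \<open>
  Let \<open>D\<close> be the local parameter of \<open>\<nu>\<close> at \<open>P\<close> and \<open>D\<^sup>*\<close> its adjoint. \<open>\<Gamma>\<^sub>\<beta>\<close> is a bounded linear
  contraction, so \<open>\<Gamma>\<^sub>\<beta> \<circ> \<nu>\<close> is pathwise differentiable with local parameter \<open>\<Gamma>\<^sub>\<beta> \<circ> D\<close>.
  For the influence function fix \<open>h\<close> and put \<open>a\<^sub>k = \<beta>\<^sub>k \<langle>h, h\<^sub>k\<rangle>\<close>. Both \<open>\<beta>\<close> and
  \<open>(\<langle>h, h\<^sub>k\<rangle>)\<^sub>k\<close> are square summable, so \<open>\<Sum>\<^sub>k |a\<^sub>k| < \<infinity>\<close>, while \<open>\<parallel>D\<^sup>*(h\<^sub>k)\<parallel> \<le> \<parallel>D\<parallel>\<close>. Hence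
  \<open>\<Sum>\<^sub>k a\<^sub>k D\<^sup>*(h\<^sub>k)\<close> converges in \<open>L\<^sup>2(P)\<close>; its limit lies in the tangent space and represents
  \<open>s \<mapsto> \<langle>\<Gamma>\<^sub>\<beta>(D s), h\<rangle>\<close>, so it is \<open>(\<Gamma>\<^sub>\<beta> \<circ> D)\<^sup>*(h)\<close>. Along an a.e. convergent subsequence
  of partial sums the limit equals \<open>\<langle>h, \<phi>\<^sub>P\<^sup>\<beta>(z)\<rangle>\<close>. Bessel's inequality gives
  \<open>\<parallel>\<phi>\<^sub>P\<^sup>\<beta>(z)\<parallel>\<^sup>2 \<le> \<Sum>\<^sub>k \<beta>\<^sub>k\<^sup>2 D\<^sup>*(h\<^sub>k)(z)\<^sup>2\<close>, whose integral is at most \<open>\<parallel>D\<parallel>\<^sup>2 \<Sum>\<^sub>k \<beta>\<^sub>k\<^sup>2\<close>.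

  The representers defining \<open>D\<^sup>*\<close> exist by the Riesz representation theorem for closed
  subspaces of \<open>L\<^sup>2(P)\<close>, which follows from the completeness of \<open>L\<^sup>2(P)\<close> by maximizing the
  functional over the unit ball.
\<close>

section \<open>Square-integrable functions\<close>

lemma two_abs_mult_le_sum_squares: "2 * \<bar>a * b\<bar> \<le> a^2 + (b::real)^2"
proof -
  have "0 \<le> (\<bar>a\<bar> - \<bar>b\<bar>)^2" by simp
  then show ?thesis by (simp add: power2_eq_square algebra_simps abs_mult)
qed

definition L2_sqnorm :: "'a measure \<Rightarrow> ('a \<Rightarrow> real) \<Rightarrow> real" where
  "L2_sqnorm M s = (\<integral>z. (s z)^2 \<partial>M)"

lemma L2_measurable: "s \<in> L2 M \<Longrightarrow> s \<in> borel_measurable M"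
  by (simp add: L2_def)

lemma L2_integrable_square: "s \<in> L2 M \<Longrightarrow> integrable M (\<lambda>z. (s z)^2)"
  by (simp add: L2_def)

lemma integrable_mult_L2:
  assumes "s \<in> L2 M" "t \<in> L2 M"
  shows "integrable M (\<lambda>z. s z * t z)"
proof (rule Bochner_Integration.integrable_bound[where f="\<lambda>z. (s z)^2 + (t z)^2"])
  show "integrable M (\<lambda>z. (s z)^2 + (t z)^2)" "(\<lambda>z. s z * t z) \<in> borel_measurable M"
    using assms by (auto simp: L2_def)
  have "\<bar>s z * t z\<bar> \<le> (s z)^2 + (t z)^2" for z
    using two_abs_mult_le_sum_squares[of "s z" "t z"] by simp
  then show "AE z in M. norm (s z * t z) \<le> norm ((s z)^2 + (t z)^2)"
    by (intro AE_I2) simp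
qed

lemma L2_add:
  assumes "s \<in> L2 M" "t \<in> L2 M"
  shows "(\<lambda>z. s z + t z) \<in> L2 M"
proof -
  have "integrable M (\<lambda>z. (s z)^2 + 2 * (s z * t z) + (t z)^2)"
    using assms integrable_mult_L2[OF assms] by (auto simp: L2_def)
  then show ?thesis
    using assms by (auto simp: L2_def power2_sum algebra_simps intro!: borel_measurable_add)
qed

lemma L2_scale: "s \<in> L2 M \<Longrightarrow> (\<lambda>z. a * s z) \<in> L2 M"
  by (auto simp: L2_def power_mult_distrib)

lemma L2_diff: "s \<in> L2 M \<Longrightarrow> t \<in> L2 M \<Longrightarrow> (\<lambda>z. s z - t z) \<in> L2 M"
  using L2_add[of s M "\<lambda>z. (-1) * t z"] L2_scale[of t M "-1"] by simp

lemma L2_zero: "(\<lambda>z. 0) \<in> L2 M"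
  by (simp add: L2_def)

lemma L2_sum: "(\<And>i. i \<in> I \<Longrightarrow> f i \<in> L2 M) \<Longrightarrow> (\<lambda>z. \<Sum>i\<in>I. f i z) \<in> L2 M"
proof (induction I rule: infinite_finite_induct)
  case (insert x F)
  then show ?case using L2_add[of "f x" M "\<lambda>z. \<Sum>i\<in>F. f i z"] by simp
qed (simp_all add: L2_zero)

lemma L2_sqnorm_nonneg: "0 \<le> L2_sqnorm M s"
  by (simp add: L2_sqnorm_def)

lemma L2_sqnorm_scale: "L2_sqnorm M (\<lambda>z. a * s z) = a^2 * L2_sqnorm M s"
  by (simp add: L2_sqnorm_def power_mult_distrib)

lemma L2_sqnorm_diff_commute: "L2_sqnorm M (\<lambda>z. s z - t z) = L2_sqnorm M (\<lambda>z. t z - s z)"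
  by (simp add: L2_sqnorm_def power2_commute)

lemma L2_sqnorm_add:
  assumes "s \<in> L2 M" "t \<in> L2 M"
  shows "L2_sqnorm M (\<lambda>z. s z + t z) = L2_sqnorm M s + 2 * (\<integral>z. s z * t z \<partial>M) + L2_sqnorm M t"
proof -
  have "L2_sqnorm M (\<lambda>z. s z + t z) = (\<integral>z. (s z)^2 + 2 * (s z * t z) + (t z)^2 \<partial>M)"
    unfolding L2_sqnorm_def by (simp add: power2_sum algebra_simps)
  also have "\<dots> = L2_sqnorm M s + 2 * (\<integral>z. s z * t z \<partial>M) + L2_sqnorm M t"
    using assms integrable_mult_L2[OF assms] by (simp add: L2_def L2_sqnorm_def)
  finally show ?thesis .
qed

lemma L2_sqnorm_diff:
  assumes "s \<in> L2 M" "t \<in> L2 M"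
  shows "L2_sqnorm M (\<lambda>z. s z - t z) = L2_sqnorm M s - 2 * (\<integral>z. s z * t z \<partial>M) + L2_sqnorm M t"
  using L2_sqnorm_add[OF assms(1) L2_scale[OF assms(2)], of "-1"] L2_sqnorm_scale[of M "-1" t]
  by simp

lemma L2_sqnorm_parallelogram:
  assumes "s \<in> L2 M" "t \<in> L2 M"
  shows "L2_sqnorm M (\<lambda>z. s z + t z) + L2_sqnorm M (\<lambda>z. s z - t z)
    = 2 * L2_sqnorm M s + 2 * L2_sqnorm M t"
  using L2_sqnorm_add[OF assms] L2_sqnorm_diff[OF assms] by simp

lemma L2_sqnorm_add_le:
  assumes "s \<in> L2 M" "t \<in> L2 M"
  shows "L2_sqnorm M (\<lambda>z. s z + t z) \<le> 2 * L2_sqnorm M s + 2 * L2_sqnorm M t"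
  using L2_sqnorm_parallelogram[OF assms] L2_sqnorm_nonneg[of M "\<lambda>z. s z - t z"] by linarith

lemma L2_sqnorm_eq_0_AE:
  assumes "s \<in> L2 M" "L2_sqnorm M s = 0"
  shows "AE z in M. s z = 0"
proof -
  have "AE z in M. (s z)^2 = 0"
    using assms integral_nonneg_eq_0_iff_AE[of M "\<lambda>z. (s z)^2"] by (auto simp: L2_def L2_sqnorm_def)
  then show ?thesis by auto
qed

lemma L2_Cauchy_Schwarz:
  assumes "s \<in> L2 M" "t \<in> L2 M"
  shows "\<bar>\<integral>z. s z * t z \<partial>M\<bar> \<le> sqrt (L2_sqnorm M s) * sqrt (L2_sqnorm M t)"
proof (cases "L2_sqnorm M s = 0 \<or> L2_sqnorm M t = 0")
  case True
  then have "AE z in M. s z * t z = 0"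
    using L2_sqnorm_eq_0_AE[OF assms(1)] L2_sqnorm_eq_0_AE[OF assms(2)] by auto
  then have "(\<integral>z. s z * t z \<partial>M) = (\<integral>z. 0 \<partial>M)"
    using assms by (intro integral_cong_AE) (auto simp: L2_def)
  then show ?thesis by (simp add: L2_sqnorm_nonneg)
next
  case False
  define a where "a = sqrt (L2_sqnorm M s)"
  define b where "b = sqrt (L2_sqnorm M t)"
  have a: "a > 0" "a^2 = L2_sqnorm M s" and b: "b > 0" "b^2 = L2_sqnorm M t"
    using False L2_sqnorm_nonneg[of M s] L2_sqnorm_nonneg[of M t] by (auto simp: a_def b_def)
  \<comment> \<open>AM-GM with the weight \<open>c = b / a\<close>: \<open>|s t| \<le> (c s\<^sup>2 + t\<^sup>2 / c) / 2\<close>\<close>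
  define c where "c = b / a"
  have c: "c > 0" using a b by (simp add: c_def)
  have pointwise: "\<bar>s z * t z\<bar> \<le> (c * (s z)^2 + (t z)^2 / c) / 2" for z
  proof -
    have "2 * c * \<bar>s z * t z\<bar> \<le> c^2 * (s z)^2 + (t z)^2"
      using two_abs_mult_le_sum_squares[of "c * s z" "t z"] c
      by (simp add: abs_mult power_mult_distrib mult.assoc)
    then show ?thesis using c by (simp add: field_simps power2_eq_square)
  qed
  have "\<bar>\<integral>z. s z * t z \<partial>M\<bar> \<le> (\<integral>z. \<bar>s z * t z\<bar> \<partial>M)"
    by (rule integral_abs_bound)
  also have "\<dots> \<le> (\<integral>z. (c * (s z)^2 + (t z)^2 / c) / 2 \<partial>M)"
    using assms pointwise by (intro integral_mono) (auto simp: L2_def intro!: integrable_mult_L2)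
  also have "\<dots> = (c * a^2 + b^2 / c) / 2"
    using assms by (simp add: L2_def L2_sqnorm_def a(2) b(2))
  also have "\<dots> = a * b"
    using a(1) b(1) by (simp add: c_def field_simps power2_eq_square)
  finally show ?thesis by (simp add: a_def b_def)
qed

lemma L2_triangle:
  assumes "s \<in> L2 M" "t \<in> L2 M"
  shows "sqrt (L2_sqnorm M (\<lambda>z. s z + t z)) \<le> sqrt (L2_sqnorm M s) + sqrt (L2_sqnorm M t)"
proof -
  have "L2_sqnorm M (\<lambda>z. s z + t z)
      \<le> L2_sqnorm M s + 2 * (sqrt (L2_sqnorm M s) * sqrt (L2_sqnorm M t)) + L2_sqnorm M t"
    using L2_sqnorm_add[OF assms] L2_Cauchy_Schwarz[OF assms] by linarith
  also have "\<dots> = (sqrt (L2_sqnorm M s) + sqrt (L2_sqnorm M t))^2"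
    using L2_sqnorm_nonneg[of M s] L2_sqnorm_nonneg[of M t] by (simp add: power2_sum)
  finally show ?thesis
    by (simp add: real_le_lsqrt L2_sqnorm_nonneg)
qed

lemma L2_triangle_sum:
  assumes "finite K" "\<And>k. k \<in> K \<Longrightarrow> g k \<in> L2 M"
  shows "sqrt (L2_sqnorm M (\<lambda>z. \<Sum>k\<in>K. a k * g k z)) \<le> (\<Sum>k\<in>K. \<bar>a k\<bar> * sqrt (L2_sqnorm M (g k)))"
  using assms
proof (induction K rule: finite_induct)
  case empty
  then show ?case by (simp add: L2_sqnorm_def)
next
  case (insert x F)
  have "sqrt (L2_sqnorm M (\<lambda>z. \<Sum>k\<in>insert x F. a k * g k z))
      = sqrt (L2_sqnorm M (\<lambda>z. a x * g x z + (\<Sum>k\<in>F. a k * g k z)))"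
    using insert by simp
  also have "\<dots> \<le> sqrt (L2_sqnorm M (\<lambda>z. a x * g x z)) + sqrt (L2_sqnorm M (\<lambda>z. \<Sum>k\<in>F. a k * g k z))"
    using insert by (intro L2_triangle L2_scale L2_sum) auto
  also have "\<dots> \<le> \<bar>a x\<bar> * sqrt (L2_sqnorm M (g x)) + (\<Sum>k\<in>F. \<bar>a k\<bar> * sqrt (L2_sqnorm M (g k)))"
    using insert by (simp add: L2_sqnorm_scale real_sqrt_mult)
  finally show ?case using insert by simp
qed

lemma tendsto_integral_mult_L2:
  assumes s: "s \<in> L2 M" and u: "\<And>n. u n \<in> L2 M" and v: "v \<in> L2 M"
    and lim: "(\<lambda>n. L2_sqnorm M (\<lambda>z. u n z - v z)) \<longlonglongrightarrow> 0"
  shows "(\<lambda>n. \<integral>z. s z * u n z \<partial>M) \<longlonglongrightarrow> (\<integral>z. s z * v z \<partial>M)"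
proof -
  have "(\<lambda>n. (\<integral>z. s z * u n z \<partial>M) - (\<integral>z. s z * v z \<partial>M)) \<longlonglongrightarrow> 0"
  proof (rule Lim_null_comparison)
    show "\<forall>\<^sub>F n in sequentially. norm ((\<integral>z. s z * u n z \<partial>M) - (\<integral>z. s z * v z \<partial>M))
        \<le> sqrt (L2_sqnorm M s) * sqrt (L2_sqnorm M (\<lambda>z. u n z - v z))"
    proof (intro always_eventually allI)
      fix n
      have "(\<integral>z. s z * u n z \<partial>M) - (\<integral>z. s z * v z \<partial>M) = (\<integral>z. s z * (u n z - v z) \<partial>M)"
        using integrable_mult_L2[OF s u] integrable_mult_L2[OF s v] by (simp add: right_diff_distrib)
      then show "norm ((\<integral>z. s z * u n z \<partial>M) - (\<integral>z. s z * v z \<partial>M))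
          \<le> sqrt (L2_sqnorm M s) * sqrt (L2_sqnorm M (\<lambda>z. u n z - v z))"
        using L2_Cauchy_Schwarz[OF s L2_diff[OF u v]] by simp
    qed
    have "(\<lambda>n. sqrt (L2_sqnorm M (\<lambda>z. u n z - v z))) \<longlonglongrightarrow> 0"
      using tendsto_real_sqrt[OF lim] by simp
    then show "(\<lambda>n. sqrt (L2_sqnorm M s) * sqrt (L2_sqnorm M (\<lambda>z. u n z - v z))) \<longlonglongrightarrow> 0"
      by (rule tendsto_mult_right_zero)
  qed
  then show ?thesis by (simp add: LIM_zero_iff)
qed

lemma L2_sqnorm_le_if_tendsto:
  assumes u: "\<And>n. u n \<in> L2 M" and s: "s \<in> L2 M"
    and bound: "\<And>n. L2_sqnorm M (u n) \<le> c"
    and lim: "(\<lambda>n. L2_sqnorm M (\<lambda>z. u n z - s z)) \<longlonglongrightarrow> 0"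
  shows "L2_sqnorm M s \<le> c"
proof -
  have "(\<lambda>n. sqrt c + sqrt (L2_sqnorm M (\<lambda>z. u n z - s z))) \<longlonglongrightarrow> sqrt c"
    using tendsto_add[OF tendsto_const tendsto_real_sqrt[OF lim], of "sqrt c"] by simp
  moreover have "sqrt (L2_sqnorm M s) \<le> sqrt c + sqrt (L2_sqnorm M (\<lambda>z. u n z - s z))" for n
  proof -
    have "sqrt (L2_sqnorm M (\<lambda>z. u n z + (s z - u n z)))
        \<le> sqrt (L2_sqnorm M (u n)) + sqrt (L2_sqnorm M (\<lambda>z. s z - u n z))"
      by (rule L2_triangle[OF u L2_diff[OF s u]])
    then have "sqrt (L2_sqnorm M s) \<le> sqrt (L2_sqnorm M (u n)) + sqrt (L2_sqnorm M (\<lambda>z. u n z - s z))"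
      using L2_sqnorm_diff_commute[of M s "u n"] by simp
    moreover have "sqrt (L2_sqnorm M (u n)) \<le> sqrt c"
      using bound[of n] by simp
    ultimately show ?thesis
      by linarith
  qed
  ultimately have "sqrt (L2_sqnorm M s) \<le> sqrt c"
    by (intro LIMSEQ_le_const) auto
  then show ?thesis
    by simp
qed

lemma (in prob_space) integral_abs_le_sqrt_L2_sqnorm:
  assumes "s \<in> L2 M"
  shows "(\<integral>z. \<bar>s z\<bar> \<partial>M) \<le> sqrt (L2_sqnorm M s)"
proof -
  have "(\<lambda>z. \<bar>s z\<bar>) \<in> L2 M" "(\<lambda>z. 1) \<in> L2 M"
    using assms by (auto simp: L2_def)
  from L2_Cauchy_Schwarz[OF this] show ?thesis
    by (simp add: L2_sqnorm_def prob_space)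
qed

section \<open>Completeness of \<open>L\<^sup>2\<close>\<close>

lemma Cauchy_subseq_rate:
  fixes d :: "nat \<Rightarrow> nat \<Rightarrow> real" and q :: "nat \<Rightarrow> real"
  assumes Cauchy: "\<And>e. e > 0 \<Longrightarrow> \<exists>K. \<forall>m\<ge>K. \<forall>n\<ge>K. d m n < e"
    and q: "\<And>k. q k > 0"
  obtains r where "strict_mono r" "\<And>k n. r k \<le> n \<Longrightarrow> d n (r k) < q k"
proof -
  have "\<forall>k. \<exists>K. \<forall>m\<ge>K. \<forall>n\<ge>K. d m n < q k"
    using Cauchy q by blast
  then obtain K where K: "\<And>k m n. K k \<le> m \<Longrightarrow> K k \<le> n \<Longrightarrow> d m n < q k"
    by (metis choice)
  define r where "r = rec_nat (K 0) (\<lambda>k rk. max (K (Suc k)) (Suc rk))"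
  have r0: "r 0 = K 0" and rS: "\<And>k. r (Suc k) = max (K (Suc k)) (Suc (r k))"
    by (simp_all add: r_def)
  have "strict_mono r"
    unfolding strict_mono_Suc_iff by (metis rS lessI max.strict_coboundedI2)
  moreover have rK: "K k \<le> r k" for k
    by (cases k) (simp_all add: r0 rS)
  ultimately show ?thesis
    using that K by (meson order_trans)
qed

lemma AE_summable_if_summable_integrals:
  fixes d :: "nat \<Rightarrow> 'a \<Rightarrow> real"
  assumes d: "\<And>k. integrable M (d k)" and nonneg: "\<And>k z. 0 \<le> d k z"
    and summable: "summable (\<lambda>k. \<integral>z. d k z \<partial>M)"
  shows "AE z in M. summable (\<lambda>k. d k z)"
proof -
  have [measurable]: "\<And>k. d k \<in> borel_measurable M"
    using d by (rule borel_measurable_integrable)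
  have "(\<integral>\<^sup>+z. (\<Sum>k. ennreal (d k z)) \<partial>M) = (\<Sum>k. \<integral>\<^sup>+z. ennreal (d k z) \<partial>M)"
    by (rule nn_integral_suminf) measurable
  also have "\<dots> = (\<Sum>k. ennreal (\<integral>z. d k z \<partial>M))"
    by (intro suminf_cong nn_integral_eq_integral d) (simp add: nonneg)
  also have "\<dots> = ennreal (\<Sum>k. \<integral>z. d k z \<partial>M)"
    by (intro suminf_ennreal2 summable Bochner_Integration.integral_nonneg nonneg)
  finally have "(\<integral>\<^sup>+z. (\<Sum>k. ennreal (d k z)) \<partial>M) \<noteq> \<infinity>"
    by simp
  then have "AE z in M. (\<Sum>k. ennreal (d k z)) \<noteq> \<infinity>"
    by (intro nn_integral_PInf_AE) measurable
  then show ?thesis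
    by eventually_elim (intro summable_suminf_not_top, auto simp: nonneg)
qed

lemma (in prob_space) AE_convergent_if_fast_L2_Cauchy:
  assumes u: "\<And>k. u k \<in> L2 M"
    and fast: "\<And>k. L2_sqnorm M (\<lambda>z. u (Suc k) z - u k z) \<le> (1/4)^k"
  shows "AE z in M. convergent (\<lambda>k. u k z)"
proof -
  define d where "d k z = \<bar>u (Suc k) z - u k z\<bar>" for k z
  have d_L2: "(\<lambda>z. u (Suc k) z - u k z) \<in> L2 M" for k
    by (rule L2_diff[OF u u])
  have d_integrable: "integrable M (d k)" for k
    unfolding d_def
    by (rule integrable_abs,
        rule square_integrable_imp_integrable[OF L2_measurable[OF d_L2] L2_integrable_square[OF d_L2]])
  have "norm (\<integral>z. d k z \<partial>M) \<le> (1/2)^k" for k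
  proof -
    have "0 \<le> (\<integral>z. d k z \<partial>M)"
      by (intro Bochner_Integration.integral_nonneg) (simp add: d_def)
    moreover have "(\<integral>z. d k z \<partial>M) \<le> sqrt (L2_sqnorm M (\<lambda>z. u (Suc k) z - u k z))"
      unfolding d_def by (rule integral_abs_le_sqrt_L2_sqnorm[OF d_L2])
    moreover have "sqrt (L2_sqnorm M (\<lambda>z. u (Suc k) z - u k z)) \<le> (1/2)^k"
      using real_sqrt_le_mono[OF fast[of k]] by (simp add: real_sqrt_power real_sqrt_divide)
    ultimately show ?thesis
      by simp
  qed
  then have "summable (\<lambda>k. \<integral>z. d k z \<partial>M)"
    by (intro summable_comparison_test'[OF summable_geometric[of "1/2"]]) auto
  then have "AE z in M. summable (\<lambda>k. d k z)"
    by (intro AE_summable_if_summable_integrals d_integrable) (simp add: d_def)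
  then show ?thesis
  proof eventually_elim
    case (elim z)
    then have "summable (\<lambda>k. u (Suc k) z - u k z)"
      unfolding d_def by (rule summable_rabs_cancel)
    then have "convergent (\<lambda>n. u 0 z + (\<Sum>k<n. u (Suc k) z - u k z))"
      by (intro convergent_add convergent_const) (simp add: summable_iff_convergent)
    then show "convergent (\<lambda>k. u k z)"
      by (simp add: sum_lessThan_telescope[of "\<lambda>k. u k z"])
  qed
qed

text \<open>Fatou's lemma for the \<open>L\<^sup>2\<close> seminorm.\<close>

lemma L2_sqnorm_limit_le:
  assumes v: "\<And>k. v k \<in> L2 M" and w[measurable]: "w \<in> borel_measurable M"
    and lim: "AE z in M. (\<lambda>k. v k z) \<longlonglongrightarrow> w z"
    and bound: "\<And>k. K \<le> k \<Longrightarrow> L2_sqnorm M (v k) \<le> e"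
  shows "w \<in> L2 M" "L2_sqnorm M w \<le> e"
proof -
  have [measurable]: "\<And>k. v k \<in> borel_measurable M"
    using v by (rule L2_measurable)
  have "(\<integral>\<^sup>+z. ennreal ((w z)^2) \<partial>M) = (\<integral>\<^sup>+z. liminf (\<lambda>k. ennreal ((v k z)^2)) \<partial>M)"
    using lim
  proof (intro nn_integral_cong_AE, eventually_elim)
    case (elim z)
    then have "(\<lambda>k. ennreal ((v k z)^2)) \<longlonglongrightarrow> ennreal ((w z)^2)"
      by (intro tendsto_ennrealI tendsto_intros)
    then show ?case by (intro lim_imp_Liminf[symmetric]) auto
  qed
  also have "\<dots> \<le> liminf (\<lambda>k. \<integral>\<^sup>+z. ennreal ((v k z)^2) \<partial>M)"
    by (rule nn_integral_liminf) measurable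
  also have "\<dots> = liminf (\<lambda>k. ennreal (L2_sqnorm M (v k)))"
    unfolding L2_sqnorm_def using v
    by (intro arg_cong[where f=liminf] ext nn_integral_eq_integral) (auto simp: L2_def)
  also have "\<dots> \<le> limsup (\<lambda>k. ennreal (L2_sqnorm M (v k)))"
    by (rule Liminf_le_Limsup) simp
  also have "\<dots> \<le> ennreal e"
    using bound by (intro Limsup_bounded eventually_sequentiallyI[of K] ennreal_leI) auto
  finally have le: "(\<integral>\<^sup>+z. ennreal ((w z)^2) \<partial>M) \<le> ennreal e" .
  have int: "integrable M (\<lambda>z. (w z)^2)"
    using le ennreal_less_top[of e] by (intro integrableI_nonneg) (auto simp: le_less_trans)
  then show "w \<in> L2 M" by (simp add: L2_def)
  have "0 \<le> e"
    using bound[of K] L2_sqnorm_nonneg[of M "v K"] by simp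
  moreover have "ennreal (L2_sqnorm M w) \<le> ennreal e"
    using le unfolding L2_sqnorm_def by (subst nn_integral_eq_integral[symmetric, OF int]) auto
  ultimately show "L2_sqnorm M w \<le> e"
    by (simp add: ennreal_le_iff)
qed

lemma L2_sqnorm_diff_subseq_limit_le:
  fixes u :: "nat \<Rightarrow> 'a \<Rightarrow> real" and r :: "nat \<Rightarrow> nat"
  assumes u: "\<And>n. u n \<in> L2 M" and s: "s \<in> borel_measurable M" and r: "strict_mono r"
    and lim: "AE z in M. (\<lambda>k. u (r k) z) \<longlonglongrightarrow> s z"
    and K: "\<forall>m\<ge>K. \<forall>n\<ge>K. L2_sqnorm M (\<lambda>z. u m z - u n z) < e" and n: "K \<le> n"
  shows "(\<lambda>z. u n z - s z) \<in> L2 M" "L2_sqnorm M (\<lambda>z. u n z - s z) \<le> e"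
proof -
  have [measurable]: "u n \<in> borel_measurable M"
    using u by (rule L2_measurable)
  have "(\<lambda>z. u n z - s z) \<in> borel_measurable M"
    using s by measurable
  moreover have "AE z in M. (\<lambda>k. u n z - u (r k) z) \<longlonglongrightarrow> u n z - s z"
    using lim by eventually_elim (intro tendsto_intros)
  moreover have "L2_sqnorm M (\<lambda>z. u n z - u (r k) z) \<le> e" if "K \<le> k" for k
    using K n that seq_suble[OF r, of k] by (auto intro: less_imp_le)
  ultimately show "(\<lambda>z. u n z - s z) \<in> L2 M" "L2_sqnorm M (\<lambda>z. u n z - s z) \<le> e"
    using L2_sqnorm_limit_le[of "\<lambda>k z. u n z - u (r k) z" M "\<lambda>z. u n z - s z" K e, OF L2_diff[OF u u]]
    by blast+
qed

lemma (in prob_space) L2_complete: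
  assumes u: "\<And>n. u n \<in> L2 M"
    and Cauchy: "\<And>e. e > 0 \<Longrightarrow> \<exists>K. \<forall>m\<ge>K. \<forall>n\<ge>K. L2_sqnorm M (\<lambda>z. u m z - u n z) < e"
  obtains s r where "s \<in> L2 M" "(\<lambda>n. L2_sqnorm M (\<lambda>z. u n z - s z)) \<longlonglongrightarrow> 0"
    and "strict_mono r" "AE z in M. (\<lambda>k. u (r k) z) \<longlonglongrightarrow> s z"
proof -
  have [measurable]: "\<And>n. u n \<in> borel_measurable M"
    using u by (rule L2_measurable)
  obtain r where r: "strict_mono r"
    and fast: "\<And>k n. r k \<le> n \<Longrightarrow> L2_sqnorm M (\<lambda>z. u n z - u (r k) z) < (1/4)^k"
    using Cauchy_subseq_rate[of "\<lambda>m n. L2_sqnorm M (\<lambda>z. u m z - u n z)" "\<lambda>k. (1/4)^k"] Cauchy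
    by auto
  define s where "s z = lim (\<lambda>k. u (r k) z)" for z
  have s_meas[measurable]: "s \<in> borel_measurable M"
    unfolding s_def by measurable
  have "AE z in M. convergent (\<lambda>k. u (r k) z)"
  proof (rule AE_convergent_if_fast_L2_Cauchy)
    show "L2_sqnorm M (\<lambda>z. u (r (Suc k)) z - u (r k) z) \<le> (1/4)^k" for k
      using fast[of k "r (Suc k)"] r by (simp add: strict_mono_less_eq less_imp_le)
  qed (rule u)
  then have s_lim: "AE z in M. (\<lambda>k. u (r k) z) \<longlonglongrightarrow> s z"
    by eventually_elim (simp add: s_def convergent_LIMSEQ_iff)
  note close = L2_sqnorm_diff_subseq_limit_le[OF u s_meas r s_lim]
  obtain K1 where "\<forall>m\<ge>K1. \<forall>n\<ge>K1. L2_sqnorm M (\<lambda>z. u m z - u n z) < 1"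
    using Cauchy[of 1] by auto
  then have "(\<lambda>z. u K1 z - s z) \<in> L2 M"
    using close[of K1 1 K1] by blast
  from L2_diff[OF u[of K1] this] have s: "s \<in> L2 M"
    by simp
  have "(\<lambda>n. L2_sqnorm M (\<lambda>z. u n z - s z)) \<longlonglongrightarrow> 0"
  proof (rule LIMSEQ_I)
    fix e :: real assume "e > 0"
    then obtain K where K: "\<forall>m\<ge>K. \<forall>n\<ge>K. L2_sqnorm M (\<lambda>z. u m z - u n z) < e/2"
      using Cauchy[of "e/2"] by auto
    show "\<exists>K. \<forall>n\<ge>K. norm (L2_sqnorm M (\<lambda>z. u n z - s z) - 0) < e"
    proof (intro exI allI impI)
      fix n assume "K \<le> n"
      then have "L2_sqnorm M (\<lambda>z. u n z - s z) \<le> e/2"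
        using close[OF K] by blast
      then show "norm (L2_sqnorm M (\<lambda>z. u n z - s z) - 0) < e"
        using \<open>e > 0\<close> L2_sqnorm_nonneg[of M "\<lambda>z. u n z - s z"] by simp
    qed
  qed
  with s r s_lim that show ?thesis by blast
qed

section \<open>Riesz representation on closed subspaces of \<open>L\<^sup>2\<close>\<close>

lemma nonpos_if_le_mult_all_pos:
  fixes x c :: real
  assumes "\<And>a. a > 0 \<Longrightarrow> x \<le> a * c"
  shows "x \<le> 0"
proof (rule tendsto_lowerbound)
  show "((\<lambda>a. a * c) \<longlongrightarrow> 0) (at_right 0)"
    using tendsto_mult_right_zero[OF tendsto_ident_at[of 0 "{0<..}"], of c] by (simp add: mult.commute)
  show "\<forall>\<^sub>F a in at_right 0. x \<le> a * c"
    using eventually_at_right_less[of "0::real"] by eventually_elim (rule assms)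
qed (simp add: trivial_limit_at_right_real)

locale L2_closed_subspace = prob_space M for M :: "'a measure" +
  fixes T :: "('a \<Rightarrow> real) set"
  assumes subset_L2: "T \<subseteq> L2 M"
    and zero_mem: "(\<lambda>z. 0) \<in> T"
    and add_mem: "\<And>s t. s \<in> T \<Longrightarrow> t \<in> T \<Longrightarrow> (\<lambda>z. s z + t z) \<in> T"
    and scale_mem: "\<And>s a. s \<in> T \<Longrightarrow> (\<lambda>z. a * s z) \<in> T"
    and limit_mem: "\<And>s u. s \<in> L2 M \<Longrightarrow> (\<And>n. u n \<in> T) \<Longrightarrow>
      (\<lambda>n. L2_sqnorm M (\<lambda>z. u n z - s z)) \<longlonglongrightarrow> 0 \<Longrightarrow> s \<in> T"
begin

lemma mem_L2: "s \<in> T \<Longrightarrow> s \<in> L2 M"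
  using subset_L2 by blast

lemma diff_mem: "s \<in> T \<Longrightarrow> t \<in> T \<Longrightarrow> (\<lambda>z. s z - t z) \<in> T"
  using add_mem[of s "\<lambda>z. (-1) * t z"] scale_mem[of t "-1"] by simp

lemma sum_mem: "(\<And>k. k \<in> K \<Longrightarrow> f k \<in> T) \<Longrightarrow> (\<lambda>z. \<Sum>k\<in>K. a k * f k z) \<in> T"
proof (induction K rule: infinite_finite_induct)
  case (insert x F)
  then show ?case
    using add_mem[OF scale_mem[of "f x" "a x"], of "\<lambda>z. \<Sum>k\<in>F. a k * f k z"] by simp
qed (simp_all add: zero_mem)

lemma representer_unique:
  assumes f: "f \<in> T" and g: "g \<in> T"
    and eq: "\<And>s. s \<in> T \<Longrightarrow> (\<integral>z. s z * f z \<partial>M) = (\<integral>z. s z * g z \<partial>M)"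
  shows "AE z in M. f z = g z"
proof -
  define d where "d z = f z - g z" for z
  have d: "d \<in> T"
    unfolding d_def by (rule diff_mem[OF f g])
  have "L2_sqnorm M d = (\<integral>z. d z * f z - d z * g z \<partial>M)"
    by (simp add: L2_sqnorm_def d_def power2_eq_square right_diff_distrib)
  also have "\<dots> = (\<integral>z. d z * f z \<partial>M) - (\<integral>z. d z * g z \<partial>M)"
    using d f g by (intro Bochner_Integration.integral_diff integrable_mult_L2 mem_L2)
  also have "\<dots> = 0"
    using eq[OF d] by simp
  finally show ?thesis
    using L2_sqnorm_eq_0_AE[OF mem_L2[OF d]] by (simp add: d_def)
qed

context
  fixes L :: "('a \<Rightarrow> real) \<Rightarrow> real" and C :: real
  assumes L_add: "\<And>s t. s \<in> T \<Longrightarrow> t \<in> T \<Longrightarrow> L (\<lambda>z. s z + t z) = L s + L t"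
    and L_scale: "\<And>s a. s \<in> T \<Longrightarrow> L (\<lambda>z. a * s z) = a * L s"
    and L_bound: "\<And>s. s \<in> T \<Longrightarrow> \<bar>L s\<bar> \<le> C * sqrt (L2_sqnorm M s)"
begin

lemma L_diff: "s \<in> T \<Longrightarrow> t \<in> T \<Longrightarrow> L (\<lambda>z. s z - t z) = L s - L t"
  using L_add[of s "\<lambda>z. (-1) * t z"] L_scale[of t "-1"] scale_mem[of t "-1"] by simp

lemma tendsto_functional:
  assumes u: "\<And>n. u n \<in> T" and s: "s \<in> T"
    and lim: "(\<lambda>n. L2_sqnorm M (\<lambda>z. u n z - s z)) \<longlonglongrightarrow> 0"
  shows "(\<lambda>n. L (u n)) \<longlonglongrightarrow> L s"
proof -
  have dist_lim: "(\<lambda>n. sqrt (L2_sqnorm M (\<lambda>z. u n z - s z))) \<longlonglongrightarrow> 0"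
    using tendsto_real_sqrt[OF lim] by simp
  have "(\<lambda>n. L (u n) - L s) \<longlonglongrightarrow> 0"
  proof (rule Lim_null_comparison)
    show "\<forall>\<^sub>F n in sequentially. norm (L (u n) - L s) \<le> C * sqrt (L2_sqnorm M (\<lambda>z. u n z - s z))"
      using L_bound[OF diff_mem[OF u s]] by (simp add: L_diff[OF u s])
    show "(\<lambda>n. C * sqrt (L2_sqnorm M (\<lambda>z. u n z - s z))) \<longlonglongrightarrow> 0"
      using tendsto_mult_right_zero[OF dist_lim] .
  qed
  then show ?thesis
    by (simp add: LIM_zero_iff)
qed

text \<open>The parallelogram law forces a maximizing sequence on the unit ball to be Cauchy.\<close>

lemma maximizing_sequence_Cauchy:
  assumes m: "m > 0" and le: "\<And>s. s \<in> T \<Longrightarrow> L s \<le> m * sqrt (L2_sqnorm M s)"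
    and u: "\<And>n. u n \<in> T" and u_ball: "\<And>n. L2_sqnorm M (u n) \<le> 1"
    and lim: "(\<lambda>n. L (u n)) \<longlonglongrightarrow> m"
    and e: "e > 0"
  shows "\<exists>K. \<forall>i\<ge>K. \<forall>j\<ge>K. L2_sqnorm M (\<lambda>z. u i z - u j z) < e"
proof -
  define d where "d = min m (e * m / 16)"
  have d: "0 < d" "d \<le> m" "8 * (d / m) < e"
    using m e by (auto simp: d_def min_def field_simps)
  obtain K where K: "\<And>n. K \<le> n \<Longrightarrow> m - d < L (u n)"
    using lim[THEN order_tendstoD(1), of "m - d"] d(1) by (auto simp: eventually_at_top_linorder)
  have u_L2: "\<And>n. u n \<in> L2 M"
    using u by (rule mem_L2)
  show ?thesis
  proof (intro exI allI impI)
    fix i j assume ij: "K \<le> i" "K \<le> j"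
    have "2 * m - 2 * d < L (u i) + L (u j)"
      using K[OF ij(1)] K[OF ij(2)] by linarith
    also have "\<dots> = L (\<lambda>z. u i z + u j z)"
      by (rule L_add[OF u u, symmetric])
    also have "\<dots> \<le> m * sqrt (L2_sqnorm M (\<lambda>z. u i z + u j z))"
      by (rule le[OF add_mem[OF u u]])
    finally have "2 * (1 - d / m) \<le> sqrt (L2_sqnorm M (\<lambda>z. u i z + u j z))"
      using m by (simp add: field_simps)
    then have "(2 * (1 - d / m))^2 \<le> (sqrt (L2_sqnorm M (\<lambda>z. u i z + u j z)))^2"
      using d m by (intro power_mono) (auto simp: field_simps)
    then have "(2 * (1 - d / m))^2 \<le> L2_sqnorm M (\<lambda>z. u i z + u j z)"
      by (simp add: L2_sqnorm_nonneg)
    moreover have "4 - 8 * (d / m) \<le> (2 * (1 - d / m))^2"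
      by (simp add: power2_eq_square algebra_simps)
    ultimately have "L2_sqnorm M (\<lambda>z. u i z - u j z) \<le> 8 * (d / m)"
      using L2_sqnorm_parallelogram[OF u_L2 u_L2, of i j] u_ball[of i] u_ball[of j] by linarith
    with d show "L2_sqnorm M (\<lambda>z. u i z - u j z) < e"
      by linarith
  qed
qed

definition functional_norm :: real where
  "functional_norm = (SUP s \<in> {s \<in> T. L2_sqnorm M s \<le> 1}. L s)"

lemma bdd_above_unit_ball: "bdd_above (L ` {s \<in> T. L2_sqnorm M s \<le> 1})"
proof (rule bdd_aboveI[of _ "\<bar>C\<bar>"])
  fix x assume "x \<in> L ` {s \<in> T. L2_sqnorm M s \<le> 1}"
  then obtain s where s: "s \<in> T" "L2_sqnorm M s \<le> 1" "x = L s"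
    by blast
  have "x \<le> C * sqrt (L2_sqnorm M s)"
    using L_bound[OF s(1)] s(3) by linarith
  also have "\<dots> \<le> \<bar>C\<bar> * sqrt (L2_sqnorm M s)"
    by (intro mult_right_mono) (auto simp: L2_sqnorm_nonneg)
  also have "\<dots> \<le> \<bar>C\<bar> * 1"
    using s(2) by (intro mult_left_mono) (auto simp: L2_sqnorm_nonneg)
  finally show "x \<le> \<bar>C\<bar>"
    by simp
qed

lemma le_functional_norm: "s \<in> T \<Longrightarrow> L2_sqnorm M s \<le> 1 \<Longrightarrow> L s \<le> functional_norm"
  unfolding functional_norm_def by (intro cSUP_upper bdd_above_unit_ball) simp

lemma functional_norm_nonneg: "0 \<le> functional_norm"
  using le_functional_norm[OF zero_mem] L_scale[OF zero_mem, of 0] by (simp add: L2_sqnorm_def)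

lemma le_functional_norm_mult:
  assumes s: "s \<in> T"
  shows "L s \<le> functional_norm * sqrt (L2_sqnorm M s)"
proof (cases "L2_sqnorm M s = 0")
  case True
  then show ?thesis
    using L_bound[OF s] by simp
next
  case False
  define q where "q = sqrt (L2_sqnorm M s)"
  have q: "q > 0" "q^2 = L2_sqnorm M s"
    using False L2_sqnorm_nonneg[of M s] by (auto simp: q_def)
  have "L2_sqnorm M (\<lambda>z. (1/q) * s z) = (1/q)^2 * q^2"
    by (rule L2_sqnorm_scale[of M "1/q" s, unfolded q(2)[symmetric]])
  also have "\<dots> = 1"
    using q(1) by (simp add: power_divide)
  finally have "L (\<lambda>z. (1/q) * s z) \<le> functional_norm"
    by (intro le_functional_norm scale_mem s) simp
  then have "L s / q \<le> functional_norm"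
    using L_scale[OF s, of "1/q"] by simp
  then show ?thesis
    using q by (simp add: q_def[symmetric] pos_divide_le_eq mult.commute)
qed

lemma functional_norm_pos:
  assumes s: "s \<in> T" "L s \<noteq> 0"
  shows "0 < functional_norm"
proof -
  define sg where "sg = (if L s > 0 then 1 else -1 :: real)"
  have "0 < sg * L s"
    using s(2) by (auto simp: sg_def)
  also have "\<dots> \<le> functional_norm * sqrt (L2_sqnorm M (\<lambda>z. sg * s z))"
    using le_functional_norm_mult[OF scale_mem[OF s(1)]] L_scale[OF s(1)] by simp
  finally show ?thesis
    using functional_norm_nonneg by (auto simp: zero_less_mult_iff)
qed

lemma maximizing_sequence_exists:
  obtains u where "\<And>n. u n \<in> T" "\<And>n. L2_sqnorm M (u n) \<le> 1"
    "(\<lambda>n. L (u n)) \<longlonglongrightarrow> functional_norm"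
proof -
  have "\<exists>s. s \<in> T \<and> L2_sqnorm M s \<le> 1 \<and> functional_norm - inverse (real (Suc n)) < L s" for n
  proof -
    have "{s \<in> T. L2_sqnorm M s \<le> 1} \<noteq> {}"
      using zero_mem by (auto simp: L2_sqnorm_def)
    from less_cSUP_iff[OF this bdd_above_unit_ball, of "functional_norm - inverse (real (Suc n))"]
    show ?thesis
      by (auto simp: functional_norm_def[symmetric])
  qed
  then obtain u where u: "\<And>n. u n \<in> T" and u_ball: "\<And>n. L2_sqnorm M (u n) \<le> 1"
    and u_large: "\<And>n. functional_norm - inverse (real (Suc n)) < L (u n)"
    by metis
  have lower: "(\<lambda>n. functional_norm - inverse (real (Suc n))) \<longlonglongrightarrow> functional_norm"
    using tendsto_diff[OF tendsto_const LIMSEQ_inverse_real_of_nat] by simp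
  have "(\<lambda>n. L (u n)) \<longlonglongrightarrow> functional_norm"
  proof (rule tendsto_sandwich[OF _ _ lower tendsto_const])
    show "\<forall>\<^sub>F n in sequentially. functional_norm - inverse (real (Suc n)) \<le> L (u n)"
      by (intro always_eventually allI less_imp_le u_large)
    show "\<forall>\<^sub>F n in sequentially. L (u n) \<le> functional_norm"
      by (intro always_eventually allI le_functional_norm u u_ball)
  qed
  with u u_ball that show ?thesis
    by blast
qed

lemma exists_norming_element:
  assumes pos: "0 < functional_norm"
  obtains s where "s \<in> T" "L2_sqnorm M s = 1" "L s = functional_norm"
proof -
  obtain u where u: "\<And>n. u n \<in> T" and u_ball: "\<And>n. L2_sqnorm M (u n) \<le> 1"
    and Lu_lim: "(\<lambda>n. L (u n)) \<longlonglongrightarrow> functional_norm"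
    by (rule maximizing_sequence_exists) blast
  have u_L2: "\<And>n. u n \<in> L2 M"
    using u by (rule mem_L2)
  obtain s r where s: "s \<in> L2 M" and s_lim: "(\<lambda>n. L2_sqnorm M (\<lambda>z. u n z - s z)) \<longlonglongrightarrow> 0"
    and "strict_mono r" "AE z in M. (\<lambda>k. u (r k) z) \<longlonglongrightarrow> s z"
    by (rule L2_complete[OF u_L2 maximizing_sequence_Cauchy[OF pos le_functional_norm_mult u u_ball Lu_lim]])
  have sT: "s \<in> T"
    by (rule limit_mem[OF s u s_lim])
  have Ls: "L s = functional_norm"
    using tendsto_functional[OF u sT s_lim] Lu_lim by (rule LIMSEQ_unique)
  have "L2_sqnorm M s \<le> 1"
    by (rule L2_sqnorm_le_if_tendsto[OF u_L2 s u_ball s_lim])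
  then have "sqrt (L2_sqnorm M s) \<le> 1"
    by simp
  moreover have "functional_norm \<le> functional_norm * sqrt (L2_sqnorm M s)"
    using le_functional_norm_mult[OF sT] Ls by simp
  ultimately have "sqrt (L2_sqnorm M s) = 1"
    using pos by (simp add: mult_le_cancel_left1)
  with sT Ls that show ?thesis
    by simp
qed

text \<open>First-order condition at a norming element \<open>s\<close>: for \<open>a > 0\<close>,
  \<open>m + a L t = L (s + a t) \<le> m \<parallel>s + a t\<parallel> \<le> m (1 + \<parallel>s + a t\<parallel>\<^sup>2) / 2 = m (1 + a \<langle>s, t\<rangle> + a\<^sup>2 \<parallel>t\<parallel>\<^sup>2 / 2)\<close>;
  let \<open>a \<rightarrow> 0\<close>.\<close>

lemma norming_element_first_order:
  assumes s: "s \<in> T" "L2_sqnorm M s = 1" "L s = m" "m \<ge> 0"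
    and le: "\<And>t. t \<in> T \<Longrightarrow> L t \<le> m * sqrt (L2_sqnorm M t)"
    and t: "t \<in> T"
  shows "L t \<le> m * (\<integral>z. s z * t z \<partial>M)"
proof -
  define I where "I = (\<integral>z. s z * t z \<partial>M)"
  have "L t - m * I \<le> a * (m * L2_sqnorm M t / 2)" if a: "a > 0" for a
  proof -
    define w where "w z = s z + a * t z" for z
    have w: "w \<in> T"
      unfolding w_def by (rule add_mem[OF s(1) scale_mem[OF t]])
    have Nw: "L2_sqnorm M w = 1 + 2 * a * I + a^2 * L2_sqnorm M t"
      unfolding w_def using L2_sqnorm_add[OF mem_L2[OF s(1)] L2_scale[OF mem_L2[OF t]], of a] s(2)
      by (simp add: I_def L2_sqnorm_scale mult.left_commute)
    have "m + a * L t = L w"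
      unfolding w_def using L_add[OF s(1) scale_mem[OF t]] L_scale[OF t] s(3) by simp
    also have "\<dots> \<le> m * sqrt (L2_sqnorm M w)"
      by (rule le[OF w])
    also have "\<dots> \<le> m * ((1 + L2_sqnorm M w) / 2)"
      using arith_geo_mean_sqrt[of 1 "L2_sqnorm M w"] s(4)
      by (intro mult_left_mono) (auto simp: L2_sqnorm_nonneg)
    also have "\<dots> = m + a * (m * I) + a * (a * (m * L2_sqnorm M t / 2))"
      unfolding Nw by (simp add: algebra_simps power2_eq_square)
    finally have "a * (L t - m * I) \<le> a * (a * (m * L2_sqnorm M t / 2))"
      by (simp add: right_diff_distrib)
    then show ?thesis
      using a by (rule mult_left_le_imp_le)
  qed
  then have "L t - m * I \<le> 0"
    by (rule nonpos_if_le_mult_all_pos)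
  then show ?thesis
    by (simp add: I_def)
qed

theorem riesz_representation:
  obtains f where "f \<in> T" "\<And>s. s \<in> T \<Longrightarrow> L s = (\<integral>z. s z * f z \<partial>M)"
proof (cases "\<forall>s\<in>T. L s = 0")
  case True
  then show ?thesis
    using zero_mem that[of "\<lambda>z. 0"] by simp
next
  case False
  then obtain s0 where "s0 \<in> T" "L s0 \<noteq> 0"
    by blast
  then have pos: "0 < functional_norm"
    by (rule functional_norm_pos)
  obtain s where s: "s \<in> T" "L2_sqnorm M s = 1" "L s = functional_norm"
    by (rule exists_norming_element[OF pos])
  have "L t = (\<integral>z. t z * (functional_norm * s z) \<partial>M)" if t: "t \<in> T" for t
  proof -
    have "L t \<le> functional_norm * (\<integral>z. s z * t z \<partial>M)"
      using norming_element_first_order[OF s _ le_functional_norm_mult t] pos by simp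
    moreover have "- L t \<le> functional_norm * (\<integral>z. s z * (- t z) \<partial>M)"
      using norming_element_first_order[OF s _ le_functional_norm_mult scale_mem[OF t, of "-1"]] pos
        L_scale[OF t, of "-1"]
      by simp
    moreover have "(\<integral>z. t z * (functional_norm * s z) \<partial>M) = (\<integral>z. functional_norm * (s z * t z) \<partial>M)"
      by (simp add: mult_ac)
    ultimately show ?thesis
      by simp
  qed
  then show ?thesis
    using scale_mem[OF s(1)] that by blast
qed

end

end

section \<open>Orthonormal sequences and \<open>\<Gamma>\<^sub>\<beta>\<close>\<close>

lemma summable_if_tails_small:
  fixes f :: "nat \<Rightarrow> 'a::{real_normed_vector, complete_space}"
  assumes tails: "\<And>e. e > 0 \<Longrightarrow> \<exists>N. \<forall>m\<ge>N. \<forall>n. norm (sum f {m..<n}) < e"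
  shows "summable f"
  unfolding summable_iff_convergent
proof (rule Cauchy_convergent, rule metric_CauchyI)
  fix e :: real assume "e > 0"
  then obtain N where N: "\<And>m n. N \<le> m \<Longrightarrow> norm (sum f {m..<n}) < e"
    using tails by blast
  have "dist (\<Sum>k<m. f k) (\<Sum>k<n. f k) < e" if "N \<le> m" "m \<le> n" for m n
  proof -
    have "(\<Sum>k<n. f k) - (\<Sum>k<m. f k) = sum f {m..<n}"
      using sum_diff_nat_ivl[of 0 m n f] that(2) by (simp add: lessThan_atLeast0)
    then have "dist (\<Sum>k<m. f k) (\<Sum>k<n. f k) = norm (sum f {m..<n})"
      by (metis dist_commute dist_norm)
    then show ?thesis
      using N[OF that(1)] by simp
  qed
  then show "\<exists>N. \<forall>m\<ge>N. \<forall>n\<ge>N. dist (\<Sum>k<m. f k) (\<Sum>k<n. f k) < e"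
    by (metis dist_commute nle_le)
qed

context
  fixes hs :: "nat \<Rightarrow> 'h::{real_inner, complete_space}"
  assumes onb: "onb_padded hs"
begin

lemma onb_padded_orthogonal: "j \<noteq> k \<Longrightarrow> inner (hs j) (hs k) = 0"
  using onb by (auto simp: onb_padded_def)

lemma onb_padded_norm_le_1: "norm (hs k) \<le> 1"
  using onb unfolding onb_padded_def by (metis norm_zero order_refl zero_le_one)

lemma norm_sum_onb_squared_le:
  "finite K \<Longrightarrow> (norm (\<Sum>k\<in>K. c k *\<^sub>R hs k))^2 \<le> (\<Sum>k\<in>K. (c k)^2)"
proof (induction K rule: finite_induct)
  case (insert x F)
  have pythagoras: "(norm (u + v))^2 = (norm u)^2 + (norm v)^2" if "inner u v = 0" for u v :: 'h
    using that by (simp add: power2_norm_eq_inner inner_add_left inner_add_right inner_commute)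
  have "inner (c x *\<^sub>R hs x) (\<Sum>k\<in>F. c k *\<^sub>R hs k) = (\<Sum>k\<in>F. c x * c k * inner (hs x) (hs k))"
    by (simp add: inner_sum_right mult_ac)
  also have "\<dots> = 0"
    using insert(2) onb_padded_orthogonal by (intro sum.neutral) (metis mult_zero_right)
  finally have "(norm (c x *\<^sub>R hs x + (\<Sum>k\<in>F. c k *\<^sub>R hs k)))^2
      = (norm (c x *\<^sub>R hs x))^2 + (norm (\<Sum>k\<in>F. c k *\<^sub>R hs k))^2"
    by (rule pythagoras)
  also have "\<dots> \<le> (c x)^2 + (\<Sum>k\<in>F. (c k)^2)"
    using insert(3) onb_padded_norm_le_1[of x]
    by (intro add_mono) (simp_all add: power_mult_distrib mult_left_le power_le_one)
  finally show ?case
    using insert(1,2) by simp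
qed simp

lemma summable_onb_series:
  assumes "summable (\<lambda>k. (c k)^2)"
  shows "summable (\<lambda>k. c k *\<^sub>R hs k)"
proof (rule summable_if_tails_small)
  fix e :: real assume e: "e > 0"
  obtain N where N: "\<And>m n. N \<le> m \<Longrightarrow> norm (\<Sum>k\<in>{m..<n}. (c k)^2) < e^2"
    using assms e unfolding summable_Cauchy by (metis zero_less_power)
  show "\<exists>N. \<forall>m\<ge>N. \<forall>n. norm (\<Sum>k\<in>{m..<n}. c k *\<^sub>R hs k) < e"
  proof (intro exI allI impI)
    fix m n assume "N \<le> m"
    have "(norm (\<Sum>k\<in>{m..<n}. c k *\<^sub>R hs k))^2 \<le> (\<Sum>k\<in>{m..<n}. (c k)^2)"
      by (rule norm_sum_onb_squared_le) simp
    also have "\<dots> < e^2"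
      using N[OF \<open>N \<le> m\<close>, of n] by simp
    finally show "norm (\<Sum>k\<in>{m..<n}. c k *\<^sub>R hs k) < e"
      using e by (simp add: power_less_imp_less_base)
  qed
qed

lemma norm_suminf_onb_squared_le:
  assumes "summable (\<lambda>k. (c k)^2)"
  shows "(norm (\<Sum>k. c k *\<^sub>R hs k))^2 \<le> (\<Sum>k. (c k)^2)"
proof (rule LIMSEQ_le_const2)
  show "(\<lambda>n. (norm (\<Sum>k<n. c k *\<^sub>R hs k))^2) \<longlonglongrightarrow> (norm (\<Sum>k. c k *\<^sub>R hs k))^2"
    by (intro tendsto_intros summable_LIMSEQ summable_onb_series assms)
  have "(norm (\<Sum>k<n. c k *\<^sub>R hs k))^2 \<le> (\<Sum>k. (c k)^2)" for n
    using norm_sum_onb_squared_le[of "{..<n}" c] sum_le_suminf[OF assms, of "{..<n}"] by simp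
  then show "\<exists>N. \<forall>n\<ge>N. (norm (\<Sum>k<n. c k *\<^sub>R hs k))^2 \<le> (\<Sum>k. (c k)^2)"
    by blast
qed

lemma bessel_inequality_finite: "(\<Sum>k<n. (inner x (hs k))^2) \<le> (norm x)^2"
proof -
  define y where "y = (\<Sum>k<n. inner x (hs k) *\<^sub>R hs k)"
  define S where "S = (\<Sum>k<n. (inner x (hs k))^2)"
  have "inner x y = S"
    by (simp add: y_def S_def inner_sum_right power2_eq_square)
  moreover have "(norm y)^2 \<le> S"
    unfolding y_def S_def by (rule norm_sum_onb_squared_le) simp
  moreover have "0 \<le> (norm (x - y))^2" by simp
  then have "0 \<le> (norm x)^2 - 2 * inner x y + (norm y)^2"
    by (simp add: power2_norm_eq_inner inner_diff_left inner_diff_right inner_commute)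
  ultimately show ?thesis
    by (simp add: S_def)
qed

lemma summable_bessel: "summable (\<lambda>k. (inner x (hs k))^2)"
  by (rule summableI_nonneg_bounded[where x="(norm x)^2"]) (auto intro: bessel_inequality_finite)

lemma bessel_inequality: "(\<Sum>k. (inner x (hs k))^2) \<le> (norm x)^2"
  by (rule suminf_le_const[OF summable_bessel bessel_inequality_finite])

lemma summable_abs_mult_bessel:
  assumes "summable (\<lambda>k. (beta k)^2)"
  shows "summable (\<lambda>k. \<bar>beta k * inner x (hs k)\<bar>)"
proof (rule summable_comparison_test'[where g="\<lambda>k. ((beta k)^2 + (inner x (hs k))^2) / 2"])
  show "summable (\<lambda>k. ((beta k)^2 + (inner x (hs k))^2) / 2)"
    by (intro summable_divide summable_add assms summable_bessel)
  show "norm \<bar>beta k * inner x (hs k)\<bar> \<le> ((beta k)^2 + (inner x (hs k))^2) / 2" for k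
    using two_abs_mult_le_sum_squares[of "beta k" "inner x (hs k)"] by simp
qed

context
  fixes beta :: "nat \<Rightarrow> real"
  assumes beta_le: "\<And>k. \<bar>beta k\<bar> \<le> 1"
begin

lemma Gamma_beta_coeff_le: "(beta k * inner x (hs k))^2 \<le> (inner x (hs k))^2"
  using beta_le[of k] by (simp add: power_mult_distrib abs_square_le_1 mult_left_le_one_le)

lemma summable_Gamma_beta_coeffs: "summable (\<lambda>k. (beta k * inner x (hs k))^2)"
  by (rule summable_comparison_test'[OF summable_bessel[of x]]) (simp add: Gamma_beta_coeff_le)

lemma summable_Gamma_beta_series: "summable (\<lambda>k. (beta k * inner x (hs k)) *\<^sub>R hs k)"
  by (rule summable_onb_series[OF summable_Gamma_beta_coeffs])

lemma norm_Gamma_beta_le: "norm (Gamma_beta beta hs x) \<le> norm x"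
proof -
  have "(norm (Gamma_beta beta hs x))^2 \<le> (\<Sum>k. (beta k * inner x (hs k))^2)"
    unfolding Gamma_beta_def by (rule norm_suminf_onb_squared_le[OF summable_Gamma_beta_coeffs])
  also have "\<dots> \<le> (\<Sum>k. (inner x (hs k))^2)"
    by (rule suminf_le[OF Gamma_beta_coeff_le summable_Gamma_beta_coeffs summable_bessel])
  also have "\<dots> \<le> (norm x)^2"
    by (rule bessel_inequality)
  finally show ?thesis
    by (rule power2_le_imp_le) simp
qed

lemma bounded_linear_Gamma_beta: "bounded_linear (Gamma_beta beta hs)"
proof (rule bounded_linear_intro[where K=1])
  show "Gamma_beta beta hs (x + y) = Gamma_beta beta hs x + Gamma_beta beta hs y" for x y
    unfolding Gamma_beta_def
    by (subst suminf_add[OF summable_Gamma_beta_series summable_Gamma_beta_series])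
      (simp add: inner_add_left algebra_simps)
  show "Gamma_beta beta hs (a *\<^sub>R x) = a *\<^sub>R Gamma_beta beta hs x" for a x
  proof -
    have "(\<lambda>k. (beta k * inner (a *\<^sub>R x) (hs k)) *\<^sub>R hs k) = (\<lambda>k. a *\<^sub>R ((beta k * inner x (hs k)) *\<^sub>R hs k))"
      by (simp add: algebra_simps)
    then show ?thesis
      unfolding Gamma_beta_def using suminf_scaleR_right[OF summable_Gamma_beta_series[of x], of a] by simp
  qed
  show "norm (Gamma_beta beta hs x) \<le> norm x * 1" for x
    using norm_Gamma_beta_le by simp
qed

lemma Gamma_beta_inner_sums:
  "(\<lambda>k. beta k * inner x (hs k) * inner (hs k) y) sums inner (Gamma_beta beta hs x) y"
  unfolding Gamma_beta_def
  using bounded_linear.sums[OF bounded_linear_inner_left summable_sums[OF summable_Gamma_beta_series]]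
  by simp

end

end

text \<open>The library lemma \<open>borel_measurable_suminf\<close> requires the class \<open>banach\<close>, which is not
  implied by the sort \<open>{real_normed_vector, complete_space}\<close>.\<close>

lemma borel_measurable_suminf_complete:
  fixes f :: "nat \<Rightarrow> 'a \<Rightarrow> 'b::{real_normed_vector, complete_space, second_countable_topology}"
  assumes [measurable]: "\<And>i. f i \<in> borel_measurable M"
  shows "(\<lambda>x. \<Sum>i. f i x) \<in> borel_measurable M"
proof (rule borel_measurable_LIMSEQ_metric)
  define g where "g n x = (if Cauchy (\<lambda>n. \<Sum>i<n. f i x) then \<Sum>i<n. f i x else \<Sum>i. f i x)" for n x
  show "g n \<in> borel_measurable M" for n
  proof -
    \<comment> \<open>a divergent series has the junk sum \<open>THE s. False\<close>\<close>
    have "g n x = (if Cauchy (\<lambda>n. \<Sum>i<n. f i x) then \<Sum>i<n. f i x else (THE s. False))" for x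
      by (simp add: g_def suminf_def sums_def convergent_eq_Cauchy[symmetric] convergent_def)
    then show ?thesis
      by (subst measurable_cong[where g="\<lambda>x. if Cauchy (\<lambda>n. \<Sum>i<n. f i x) then \<Sum>i<n. f i x else (THE s. False)"])
        (auto, measurable)
  qed
  show "(\<lambda>n. g n x) \<longlonglongrightarrow> (\<Sum>i. f i x)" for x
  proof (cases "Cauchy (\<lambda>n. \<Sum>i<n. f i x)")
    case True
    then have "summable (\<lambda>i. f i x)"
      by (simp add: summable_iff_convergent Cauchy_convergent)
    with True show ?thesis
      by (simp add: g_def summable_LIMSEQ)
  qed (simp add: g_def)
qed

section \<open>The tangent space and the efficient influence operator\<close>

lemma lin_span_L2: "S \<subseteq> L2 M \<Longrightarrow> t \<in> lin_span S \<Longrightarrow> t \<in> L2 M"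
  by (auto simp: lin_span_def intro!: L2_sum L2_scale)

lemma lin_span_zero: "(\<lambda>z. 0) \<in> lin_span S"
  unfolding lin_span_def by (intro CollectI exI[of _ "{}"]) auto

lemma lin_span_add:
  assumes "t1 \<in> lin_span S" "t2 \<in> lin_span S"
  shows "(\<lambda>z. t1 z + t2 z) \<in> lin_span S"
proof -
  obtain F1 c1 where F1: "finite F1" "F1 \<subseteq> S" "t1 = (\<lambda>z. \<Sum>f\<in>F1. c1 f * f z)"
    using assms(1) by (auto simp: lin_span_def)
  obtain F2 c2 where F2: "finite F2" "F2 \<subseteq> S" "t2 = (\<lambda>z. \<Sum>f\<in>F2. c2 f * f z)"
    using assms(2) by (auto simp: lin_span_def)
  define c where "c f = (if f \<in> F1 then c1 f else 0) + (if f \<in> F2 then c2 f else 0)" for f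
  have fin: "finite (F1 \<union> F2)"
    using F1 F2 by simp
  have "(\<Sum>f\<in>F1 \<union> F2. c f * f z) = (\<Sum>f\<in>F1. c1 f * f z) + (\<Sum>f\<in>F2. c2 f * f z)" for z
  proof -
    have "c f * f z = (if f \<in> F1 then c1 f * f z else 0) + (if f \<in> F2 then c2 f * f z else 0)" for f
      by (simp add: c_def distrib_right)
    then have "(\<Sum>f\<in>F1 \<union> F2. c f * f z) = (\<Sum>f\<in>F1 \<union> F2. (if f \<in> F1 then c1 f * f z else 0))
        + (\<Sum>f\<in>F1 \<union> F2. (if f \<in> F2 then c2 f * f z else 0))"
      by (simp add: sum.distrib)
    also have "(\<Sum>f\<in>F1 \<union> F2. (if f \<in> F1 then c1 f * f z else 0)) = (\<Sum>f\<in>F1. c1 f * f z)"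
      using sum.inter_restrict[OF fin, of "\<lambda>f. c1 f * f z" F1, symmetric] by (simp add: Int_absorb1)
    also have "(\<Sum>f\<in>F1 \<union> F2. (if f \<in> F2 then c2 f * f z else 0)) = (\<Sum>f\<in>F2. c2 f * f z)"
      using sum.inter_restrict[OF fin, of "\<lambda>f. c2 f * f z" F2, symmetric] by (simp add: Int_absorb1)
    finally show ?thesis .
  qed
  then show ?thesis
    unfolding lin_span_def using F1 F2
    by (intro CollectI exI[of _ "F1 \<union> F2"] exI[of _ c]) auto
qed

lemma lin_span_scale: "t \<in> lin_span S \<Longrightarrow> (\<lambda>z. a * t z) \<in> lin_span S"
  unfolding lin_span_def
  by (auto simp: sum_distrib_left mult.assoc intro!: exI[of _ "\<lambda>f. a * _ f"])

context
  fixes lam :: "'z measure" and model :: "'z measure set" and P :: "'z measure"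
begin

lemma tangent_space_iff:
  "s \<in> tangent_space lam model P \<longleftrightarrow> s \<in> L2 P \<and>
    (\<forall>e>0. \<exists>t\<in>lin_span (tangent_set lam model P). L2_sqnorm P (\<lambda>z. s z - t z) < e)"
  by (simp add: tangent_space_def L2_sqnorm_def)

lemma lin_span_tangent_set_L2: "t \<in> lin_span (tangent_set lam model P) \<Longrightarrow> t \<in> L2 P"
  by (rule lin_span_L2) (auto simp: tangent_set_def)

lemma tangent_space_L2: "s \<in> tangent_space lam model P \<Longrightarrow> s \<in> L2 P"
  by (simp add: tangent_space_iff)

lemma tangent_space_zero: "(\<lambda>z. 0) \<in> tangent_space lam model P"
  unfolding tangent_space_iff using lin_span_zero
  by (auto simp: L2_zero L2_sqnorm_def intro!: bexI[of _ "\<lambda>z. 0"])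

lemma tangent_space_add:
  assumes s: "s \<in> tangent_space lam model P" and t: "t \<in> tangent_space lam model P"
  shows "(\<lambda>z. s z + t z) \<in> tangent_space lam model P"
  unfolding tangent_space_iff
proof (intro conjI allI impI)
  show "(\<lambda>z. s z + t z) \<in> L2 P"
    using s t by (intro L2_add tangent_space_L2)
  fix e :: real assume "e > 0"
  then obtain s' t' where s': "s' \<in> lin_span (tangent_set lam model P)" "L2_sqnorm P (\<lambda>z. s z - s' z) < e/4"
    and t': "t' \<in> lin_span (tangent_set lam model P)" "L2_sqnorm P (\<lambda>z. t z - t' z) < e/4"
    using s t unfolding tangent_space_iff by (meson zero_less_divide_iff zero_less_numeral)
  have "L2_sqnorm P (\<lambda>z. s z + t z - (s' z + t' z)) = L2_sqnorm P (\<lambda>z. (s z - s' z) + (t z - t' z))"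
    by (simp add: algebra_simps)
  also have "\<dots> \<le> 2 * L2_sqnorm P (\<lambda>z. s z - s' z) + 2 * L2_sqnorm P (\<lambda>z. t z - t' z)"
    using s t s'(1) t'(1) by (intro L2_sqnorm_add_le L2_diff tangent_space_L2 lin_span_tangent_set_L2)
  also have "\<dots> < e"
    using s'(2) t'(2) by simp
  finally show "\<exists>u\<in>lin_span (tangent_set lam model P). L2_sqnorm P (\<lambda>z. s z + t z - u z) < e"
    using lin_span_add[OF s'(1) t'(1)] by (intro bexI[of _ "\<lambda>z. s' z + t' z"]) simp_all
qed

lemma tangent_space_scale:
  assumes s: "s \<in> tangent_space lam model P"
  shows "(\<lambda>z. a * s z) \<in> tangent_space lam model P"
  unfolding tangent_space_iff
proof (intro conjI allI impI)
  show "(\<lambda>z. a * s z) \<in> L2 P"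
    using s by (intro L2_scale tangent_space_L2)
  fix e :: real assume "e > 0"
  then have "e / (a^2 + 1) > 0" by (simp add: add_nonneg_pos)
  then obtain s' where s': "s' \<in> lin_span (tangent_set lam model P)"
    "L2_sqnorm P (\<lambda>z. s z - s' z) < e / (a^2 + 1)"
    using s unfolding tangent_space_iff by blast
  have "L2_sqnorm P (\<lambda>z. a * s z - a * s' z) = a^2 * L2_sqnorm P (\<lambda>z. s z - s' z)"
    using L2_sqnorm_scale[of P a "\<lambda>z. s z - s' z"] by (simp add: algebra_simps)
  also have "\<dots> \<le> (a^2 + 1) * L2_sqnorm P (\<lambda>z. s z - s' z)"
    using L2_sqnorm_nonneg[of P] by (simp add: algebra_simps)
  also have "\<dots> < e"
    using s'(2) by (simp add: pos_less_divide_eq add_nonneg_pos mult.commute)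
  finally show "\<exists>u\<in>lin_span (tangent_set lam model P). L2_sqnorm P (\<lambda>z. a * s z - u z) < e"
    using lin_span_scale[OF s'(1)] by (intro bexI[of _ "\<lambda>z. a * s' z"]) simp_all
qed

lemma tangent_space_limit:
  assumes s: "s \<in> L2 P" and u: "\<And>n. u n \<in> tangent_space lam model P"
    and lim: "(\<lambda>n. L2_sqnorm P (\<lambda>z. u n z - s z)) \<longlonglongrightarrow> 0"
  shows "s \<in> tangent_space lam model P"
  unfolding tangent_space_iff
proof (intro conjI allI impI s)
  fix e :: real assume "e > 0"
  then obtain n where n: "L2_sqnorm P (\<lambda>z. u n z - s z) < e/4"
    using lim[THEN order_tendstoD(2), of "e/4"] by (auto dest: eventually_happens)
  obtain t where t: "t \<in> lin_span (tangent_set lam model P)" "L2_sqnorm P (\<lambda>z. u n z - t z) < e/4"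
    using u[of n] \<open>e > 0\<close> unfolding tangent_space_iff by (meson zero_less_divide_iff zero_less_numeral)
  have "L2_sqnorm P (\<lambda>z. s z - t z) = L2_sqnorm P (\<lambda>z. (s z - u n z) + (u n z - t z))"
    by simp
  also have "\<dots> \<le> 2 * L2_sqnorm P (\<lambda>z. s z - u n z) + 2 * L2_sqnorm P (\<lambda>z. u n z - t z)"
    by (intro L2_sqnorm_add_le L2_diff s tangent_space_L2[OF u] lin_span_tangent_set_L2[OF t(1)])
  also have "\<dots> < e"
    using n t(2) L2_sqnorm_diff_commute[of P s "u n"] by simp
  finally show "\<exists>t\<in>lin_span (tangent_set lam model P). L2_sqnorm P (\<lambda>z. s z - t z) < e"
    using t(1) by blast
qed

lemma L2_closed_subspace_tangent_space:
  assumes "prob_space P"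
  shows "L2_closed_subspace P (tangent_space lam model P)"
proof (intro L2_closed_subspace.intro L2_closed_subspace_axioms.intro assms)
  show "tangent_space lam model P \<subseteq> L2 P"
    using tangent_space_L2 by blast
qed (fact tangent_space_zero tangent_space_add tangent_space_scale tangent_space_limit)+

end

lemma cont_linear_on_bound:
  assumes "cont_linear_on P T D"
  obtains C where "C \<ge> 0" "\<And>s. s \<in> T \<Longrightarrow> norm (D s) \<le> C * sqrt (L2_sqnorm P s)"
proof -
  obtain C where C: "\<And>s. s \<in> T \<Longrightarrow> norm (D s) \<le> C * sqrt (L2_sqnorm P s)"
    using assms unfolding cont_linear_on_def L2_sqnorm_def by blast
  have "norm (D s) \<le> max C 0 * sqrt (L2_sqnorm P s)" if "s \<in> T" for s
    using C[OF that] by (smt (verit) mult_right_mono max.cobounded1 real_sqrt_ge_zero L2_sqnorm_nonneg)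
  then show ?thesis
    using that[of "max C 0"] by simp
qed

lemma cont_linear_on_bounded_linear_comp:
  assumes G: "bounded_linear G" and D: "cont_linear_on P T D"
  shows "cont_linear_on P T (G \<circ> D)"
proof -
  interpret G: bounded_linear G by (rule G)
  obtain K where K: "K \<ge> 0" "\<And>x. norm (G x) \<le> norm x * K"
    using G.nonneg_bounded by blast
  obtain C where C: "\<And>s. s \<in> T \<Longrightarrow> norm (D s) \<le> C * sqrt (L2_sqnorm P s)"
    using cont_linear_on_bound[OF D] by blast
  have "norm (G (D s)) \<le> (K * C) * sqrt (L2_sqnorm P s)" if "s \<in> T" for s
    using K(2)[of "D s"] mult_right_mono[OF C[OF that] K(1)] by (simp add: mult_ac)
  then show ?thesis
    using D by (auto simp: cont_linear_on_def L2_sqnorm_def G.add G.scaleR)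
qed

lemma pathwise_diff_bounded_linear_comp:
  assumes G: "bounded_linear G" and nu: "pathwise_diff lam model nu P D"
  shows "pathwise_diff lam model (G \<circ> nu) P (G \<circ> D)"
  unfolding pathwise_diff_def
proof (intro conjI ballI allI impI)
  show "cont_linear_on P (tangent_space lam model P) (G \<circ> D)"
    by (rule cont_linear_on_bounded_linear_comp[OF G]) (use nu in \<open>simp add: pathwise_diff_def\<close>)
  interpret G: bounded_linear G by (rule G)
  obtain K where K: "K > 0" "\<And>x. norm (G x) \<le> norm x * K"
    using G.pos_bounded by blast
  have nu_diff: "\<And>s Pe e. s \<in> tangent_set lam model P \<Longrightarrow> Pe \<in> submodels lam model P s \<Longrightarrow> e > 0 \<Longrightarrow>
      \<forall>\<^sub>F \<epsilon> in at_right 0. norm (nu (Pe \<epsilon>) - nu P - \<epsilon> *\<^sub>R D s) \<le> e * \<epsilon>"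
    using nu by (simp add: pathwise_diff_def)
  fix s Pe and e :: real
  assume s: "s \<in> tangent_set lam model P" and Pe: "Pe \<in> submodels lam model P s" and e: "e > 0"
  have "\<forall>\<^sub>F \<epsilon> in at_right 0. norm (nu (Pe \<epsilon>) - nu P - \<epsilon> *\<^sub>R D s) \<le> (e / K) * \<epsilon>"
    using e K(1) by (intro nu_diff s Pe) simp
  then show "\<forall>\<^sub>F \<epsilon> in at_right 0. norm ((G \<circ> nu) (Pe \<epsilon>) - (G \<circ> nu) P - \<epsilon> *\<^sub>R (G \<circ> D) s) \<le> e * \<epsilon>"
  proof eventually_elim
    case (elim \<epsilon>)
    have "norm ((G \<circ> nu) (Pe \<epsilon>) - (G \<circ> nu) P - \<epsilon> *\<^sub>R (G \<circ> D) s)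
        = norm (G (nu (Pe \<epsilon>) - nu P - \<epsilon> *\<^sub>R D s))"
      by (simp add: G.diff G.scaleR)
    also have "\<dots> \<le> norm (nu (Pe \<epsilon>) - nu P - \<epsilon> *\<^sub>R D s) * K"
      by (rule K(2))
    also have "\<dots> \<le> (e / K) * \<epsilon> * K"
      using elim K(1) by (intro mult_right_mono) auto
    finally show ?case
      using K(1) by simp
  qed
qed

context
  fixes lam :: "'z measure" and model :: "'z measure set" and P :: "'z measure"
    and D :: "('z \<Rightarrow> real) \<Rightarrow> 'h::real_inner"
  assumes P: "prob_space P" and D: "cont_linear_on P (tangent_space lam model P) D"
begin

interpretation tangent: L2_closed_subspace P "tangent_space lam model P"
  by (rule L2_closed_subspace_tangent_space[OF P])

lemma
  shows eff_infl_op_tangent_space: "eff_infl_op lam model P D h \<in> tangent_space lam model P"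
    and eff_infl_op_inner: "\<And>s. s \<in> tangent_space lam model P \<Longrightarrow>
      inner (D s) h = (\<integral>z. s z * eff_infl_op lam model P D h z \<partial>P)"
proof -
  obtain C where C: "\<And>s. s \<in> tangent_space lam model P \<Longrightarrow> norm (D s) \<le> C * sqrt (L2_sqnorm P s)"
    using cont_linear_on_bound[OF D] by blast
  obtain f where "f \<in> tangent_space lam model P"
    "\<And>s. s \<in> tangent_space lam model P \<Longrightarrow> inner (D s) h = (\<integral>z. s z * f z \<partial>P)"
  proof (rule tangent.riesz_representation[where L="\<lambda>s. inner (D s) h" and C="C * norm h"])
    show "inner (D (\<lambda>z. s z + t z)) h = inner (D s) h + inner (D t) h"
      if "s \<in> tangent_space lam model P" "t \<in> tangent_space lam model P" for s t
      using D that by (simp add: cont_linear_on_def inner_add_left)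
    show "inner (D (\<lambda>z. a * s z)) h = a * inner (D s) h" if "s \<in> tangent_space lam model P" for s a
      using D that by (simp add: cont_linear_on_def)
    show "\<bar>inner (D s) h\<bar> \<le> C * norm h * sqrt (L2_sqnorm P s)" if "s \<in> tangent_space lam model P" for s
      using Cauchy_Schwarz_ineq2[of "D s" h] mult_right_mono[OF C[OF that] norm_ge_zero[of h]]
      by (simp add: mult_ac)
  qed (rule that)
  then have "\<exists>f. f \<in> tangent_space lam model P \<and>
      (\<forall>s\<in>tangent_space lam model P. inner (D s) h = (\<integral>z. s z * f z \<partial>P))"
    by blast
  from someI_ex[OF this]
  show "eff_infl_op lam model P D h \<in> tangent_space lam model P"
    "\<And>s. s \<in> tangent_space lam model P \<Longrightarrow> inner (D s) h = (\<integral>z. s z * eff_infl_op lam model P D h z \<partial>P)"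
    unfolding eff_infl_op_def by blast+
qed

lemma eff_infl_op_eqI:
  assumes f: "f \<in> tangent_space lam model P"
    and inner_f: "\<And>s. s \<in> tangent_space lam model P \<Longrightarrow> inner (D s) h = (\<integral>z. s z * f z \<partial>P)"
  shows "AE z in P. eff_infl_op lam model P D h z = f z"
  using eff_infl_op_tangent_space f
proof (rule tangent.representer_unique)
  show "(\<integral>z. s z * eff_infl_op lam model P D h z \<partial>P) = (\<integral>z. s z * f z \<partial>P)"
    if "s \<in> tangent_space lam model P" for s
    using eff_infl_op_inner[OF that] inner_f[OF that] by simp
qed

lemma eff_infl_op_norm_le:
  assumes C: "C \<ge> 0" "\<And>s. s \<in> tangent_space lam model P \<Longrightarrow> norm (D s) \<le> C * sqrt (L2_sqnorm P s)"
  shows "sqrt (L2_sqnorm P (eff_infl_op lam model P D h)) \<le> C * norm h"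
proof -
  define f where "f = eff_infl_op lam model P D h"
  define q where "q = sqrt (L2_sqnorm P f)"
  have f: "f \<in> tangent_space lam model P"
    unfolding f_def by (rule eff_infl_op_tangent_space)
  have "q * q = (\<integral>z. f z * f z \<partial>P)"
    by (simp add: q_def L2_sqnorm_def L2_sqnorm_nonneg[unfolded L2_sqnorm_def] power2_eq_square)
  also have "\<dots> = inner (D f) h"
    using eff_infl_op_inner[OF f] by (simp add: f_def)
  also have "\<dots> \<le> norm (D f) * norm h"
    by (rule norm_cauchy_schwarz)
  also have "\<dots> \<le> (C * norm h) * q"
    using mult_right_mono[OF C(2)[OF f] norm_ge_zero[of h]] by (simp add: q_def mult_ac)
  finally have "q * q \<le> (C * norm h) * q" .
  moreover have "0 \<le> q" "0 \<le> C * norm h"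
    using C(1) by (simp_all add: q_def L2_sqnorm_nonneg)
  ultimately show ?thesis
    unfolding q_def[symmetric] f_def[symmetric]
    by (cases "q = 0") (auto intro: mult_right_le_imp_le)
qed

lemma eff_infl_op_series_inner_sums:
  assumes s: "s \<in> tangent_space lam model P" and \<psi>: "\<psi> \<in> L2 P"
    and lim: "(\<lambda>n. L2_sqnorm P (\<lambda>z. (\<Sum>k<n. a k * eff_infl_op lam model P D (v k) z) - \<psi> z)) \<longlonglongrightarrow> 0"
  shows "(\<lambda>k. a k * inner (D s) (v k)) sums (\<integral>z. s z * \<psi> z \<partial>P)"
proof -
  have s_L2: "s \<in> L2 P"
    by (rule tangent_space_L2[OF s])
  have f_L2: "eff_infl_op lam model P D (v k) \<in> L2 P" for k
    by (rule tangent_space_L2[OF eff_infl_op_tangent_space])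
  have "(\<integral>z. s z * (\<Sum>k<n. a k * eff_infl_op lam model P D (v k) z) \<partial>P)
      = (\<Sum>k<n. a k * inner (D s) (v k))" for n
  proof -
    have "(\<integral>z. s z * (\<Sum>k<n. a k * eff_infl_op lam model P D (v k) z) \<partial>P)
        = (\<integral>z. (\<Sum>k<n. a k * (s z * eff_infl_op lam model P D (v k) z)) \<partial>P)"
      by (simp add: sum_distrib_left mult.left_commute)
    also have "\<dots> = (\<Sum>k<n. \<integral>z. a k * (s z * eff_infl_op lam model P D (v k) z) \<partial>P)"
      by (rule Bochner_Integration.integral_sum) (intro integrable_mult_right integrable_mult_L2 s_L2 f_L2)
    also have "\<dots> = (\<Sum>k<n. a k * inner (D s) (v k))"
      using eff_infl_op_inner[OF s] by simp
    finally show ?thesis .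
  qed
  moreover have "(\<lambda>n. \<integral>z. s z * (\<Sum>k<n. a k * eff_infl_op lam model P D (v k) z) \<partial>P)
      \<longlonglongrightarrow> (\<integral>z. s z * \<psi> z \<partial>P)"
    by (rule tendsto_integral_mult_L2[OF s_L2 _ \<psi> lim]) (intro L2_sum L2_scale f_L2)
  ultimately show ?thesis
    by (simp add: sums_def)
qed

end

section \<open>The influence function \<open>\<phi>\<^sub>P\<^sup>\<beta>\<close>\<close>

lemma L2_partial_sums_diff_le:
  fixes f :: "nat \<Rightarrow> 'a \<Rightarrow> real" and i j :: nat
  assumes f: "\<And>k. f k \<in> L2 M" and bound: "\<And>k. sqrt (L2_sqnorm M (f k)) \<le> B" and "j \<le> i"
  shows "sqrt (L2_sqnorm M (\<lambda>z. (\<Sum>k<i. a k * f k z) - (\<Sum>k<j. a k * f k z)))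
    \<le> (\<Sum>k\<in>{j..<i}. \<bar>a k\<bar>) * B"
proof -
  have "(\<Sum>k<i. a k * f k z) - (\<Sum>k<j. a k * f k z) = (\<Sum>k\<in>{j..<i}. a k * f k z)" for z
    using sum_diff_nat_ivl[of 0 j i "\<lambda>k. a k * f k z"] \<open>j \<le> i\<close> by (simp add: lessThan_atLeast0)
  then have "sqrt (L2_sqnorm M (\<lambda>z. (\<Sum>k<i. a k * f k z) - (\<Sum>k<j. a k * f k z)))
      \<le> (\<Sum>k\<in>{j..<i}. \<bar>a k\<bar> * sqrt (L2_sqnorm M (f k)))"
    using L2_triangle_sum[of "{j..<i}" f M a] f by simp
  also have "\<dots> \<le> (\<Sum>k\<in>{j..<i}. \<bar>a k\<bar> * B)"
    by (intro sum_mono mult_left_mono bound) simp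
  finally show ?thesis
    by (simp add: sum_distrib_right)
qed

lemma L2_partial_sums_Cauchy:
  fixes f :: "nat \<Rightarrow> 'a \<Rightarrow> real"
  assumes f: "\<And>k. f k \<in> L2 M" and bound: "\<And>k. sqrt (L2_sqnorm M (f k)) \<le> B"
    and a: "summable (\<lambda>k. \<bar>a k\<bar>)" and e: "e > 0"
  shows "\<exists>K. \<forall>i\<ge>K. \<forall>j\<ge>K. L2_sqnorm M (\<lambda>z. (\<Sum>k<i. a k * f k z) - (\<Sum>k<j. a k * f k z)) < e"
proof -
  have B: "0 \<le> B"
    using order_trans[OF real_sqrt_ge_zero[OF L2_sqnorm_nonneg] bound] .
  then have "sqrt e / (B + 1) > 0"
    using e by simp
  then obtain N where N: "\<forall>m\<ge>N. \<forall>n. norm (\<Sum>k\<in>{m..<n}. \<bar>a k\<bar>) < sqrt e / (B + 1)"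
    using a unfolding summable_Cauchy by blast
  have small: "L2_sqnorm M (\<lambda>z. (\<Sum>k<i. a k * f k z) - (\<Sum>k<j. a k * f k z)) < e"
    if "N \<le> j" "j \<le> i" for i j
  proof -
    have "sqrt (L2_sqnorm M (\<lambda>z. (\<Sum>k<i. a k * f k z) - (\<Sum>k<j. a k * f k z)))
        \<le> (\<Sum>k\<in>{j..<i}. \<bar>a k\<bar>) * B"
      using f bound that(2) by (rule L2_partial_sums_diff_le)
    also have "\<dots> \<le> sqrt e / (B + 1) * B"
      using N that(1) B by (intro mult_right_mono) (auto intro: less_imp_le)
    also have "\<dots> < sqrt e"
      using e B by (simp add: field_simps)
    finally show ?thesis
      by simp
  qed
  show ?thesis
  proof (intro exI allI impI)
    fix i j assume "N \<le> i" "N \<le> j"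
    then show "L2_sqnorm M (\<lambda>z. (\<Sum>k<i. a k * f k z) - (\<Sum>k<j. a k * f k z)) < e"
      using small[of j i] small[of i j]
        L2_sqnorm_diff_commute[of M "\<lambda>z. \<Sum>k<i. a k * f k z" "\<lambda>z. \<Sum>k<j. a k * f k z"]
      by (cases "j \<le> i") auto
  qed
qed

lemma (in prob_space) L2_series_limit:
  assumes f: "\<And>k. f k \<in> L2 M" and bound: "\<And>k. sqrt (L2_sqnorm M (f k)) \<le> B"
    and a: "summable (\<lambda>k. \<bar>a k\<bar>)"
  obtains \<psi> where "\<psi> \<in> L2 M"
    "(\<lambda>n. L2_sqnorm M (\<lambda>z. (\<Sum>k<n. a k * f k z) - \<psi> z)) \<longlonglongrightarrow> 0"
    "AE z in M. summable (\<lambda>k. a k * f k z) \<longrightarrow> \<psi> z = (\<Sum>k. a k * f k z)"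
proof -
  define partial where "partial n z = (\<Sum>k<n. a k * f k z)" for n z
  have "partial n \<in> L2 M" for n
    unfolding partial_def by (intro L2_sum L2_scale f)
  moreover have "\<exists>K. \<forall>i\<ge>K. \<forall>j\<ge>K. L2_sqnorm M (\<lambda>z. partial i z - partial j z) < e" if "e > 0" for e
    unfolding partial_def using f bound a that by (rule L2_partial_sums_Cauchy)
  ultimately obtain \<psi> r where \<psi>: "\<psi> \<in> L2 M"
    and lim: "(\<lambda>n. L2_sqnorm M (\<lambda>z. partial n z - \<psi> z)) \<longlonglongrightarrow> 0"
    and r: "strict_mono r" and sub_lim: "AE z in M. (\<lambda>k. partial (r k) z) \<longlonglongrightarrow> \<psi> z"
    by (rule L2_complete)
  have "AE z in M. summable (\<lambda>k. a k * f k z) \<longrightarrow> \<psi> z = (\<Sum>k. a k * f k z)"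
    using sub_lim
  proof (eventually_elim, intro impI)
    case (elim z)
    assume "summable (\<lambda>k. a k * f k z)"
    then have "(\<lambda>k. partial (r k) z) \<longlonglongrightarrow> (\<Sum>k. a k * f k z)"
      using LIMSEQ_subseq_LIMSEQ[OF summable_LIMSEQ r] by (simp add: partial_def o_def)
    with elim show "\<psi> z = (\<Sum>k. a k * f k z)"
      by (rule LIMSEQ_unique)
  qed
  with \<psi> lim show ?thesis
    using that by (simp add: partial_def)
qed

lemma nn_integral_sum_squares_finite:
  assumes f: "\<And>k. f k \<in> L2 M" and bound: "\<And>k. sqrt (L2_sqnorm M (f k)) \<le> B"
    and beta: "summable (\<lambda>k. (beta k)^2)"
  shows "(\<integral>\<^sup>+z. (\<Sum>k. ennreal ((beta k * f k z)^2)) \<partial>M) < \<infinity>"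
proof -
  have [measurable]: "\<And>k. f k \<in> borel_measurable M"
    using f by (rule L2_measurable)
  have sq_bound: "L2_sqnorm M (f k) \<le> B^2" for k
  proof -
    have "(sqrt (L2_sqnorm M (f k)))^2 \<le> B^2"
      by (rule power_mono[OF bound]) (simp add: L2_sqnorm_nonneg)
    then show ?thesis
      by (simp add: L2_sqnorm_nonneg)
  qed
  have "(\<integral>\<^sup>+z. (\<Sum>k. ennreal ((beta k * f k z)^2)) \<partial>M) = (\<Sum>k. \<integral>\<^sup>+z. ennreal ((beta k * f k z)^2) \<partial>M)"
    by (rule nn_integral_suminf) measurable
  also have "\<dots> = (\<Sum>k. ennreal ((beta k)^2 * L2_sqnorm M (f k)))"
  proof (rule suminf_cong)
    fix k
    have "integrable M (\<lambda>z. (beta k * f k z)^2)"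
      using L2_scale[OF f] by (simp add: L2_def)
    then show "(\<integral>\<^sup>+z. ennreal ((beta k * f k z)^2) \<partial>M) = ennreal ((beta k)^2 * L2_sqnorm M (f k))"
      by (simp add: nn_integral_eq_integral L2_sqnorm_def power_mult_distrib)
  qed
  also have "\<dots> \<le> (\<Sum>k. ennreal ((beta k)^2 * B^2))"
    by (intro suminf_le summableI ennreal_leI mult_left_mono sq_bound) auto
  also have "\<dots> = ennreal ((\<Sum>k. (beta k)^2) * B^2)"
    by (intro suminf_ennreal_eq sums_mult2 summable_sums beta) auto
  also have "\<dots> < \<infinity>"
    by simp
  finally show ?thesis .
qed

lemma onb_series_L2H:
  fixes hs :: "nat \<Rightarrow> 'h::{real_inner, complete_space, second_countable_topology}"
  assumes onb: "onb_padded hs" and f: "\<And>k. f k \<in> L2 M"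
    and bound: "\<And>k. sqrt (L2_sqnorm M (f k)) \<le> B" and beta: "summable (\<lambda>k. (beta k)^2)"
  shows "AE z in M. summable (\<lambda>k. (beta k * f k z)^2)"
    and "(\<lambda>z. \<Sum>k. (beta k * f k z) *\<^sub>R hs k) \<in> L2H M"
proof -
  have [measurable]: "\<And>k. f k \<in> borel_measurable M"
    using f by (rule L2_measurable)
  have finite: "(\<integral>\<^sup>+z. (\<Sum>k. ennreal ((beta k * f k z)^2)) \<partial>M) < \<infinity>"
    using f bound beta by (rule nn_integral_sum_squares_finite)
  then have "AE z in M. (\<Sum>k. ennreal ((beta k * f k z)^2)) \<noteq> \<infinity>"
    by (intro nn_integral_PInf_AE) auto
  then show AE: "AE z in M. summable (\<lambda>k. (beta k * f k z)^2)"
    by eventually_elim (rule summable_suminf_not_top, auto)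
  define \<phi> where "\<phi> z = (\<Sum>k. (beta k * f k z) *\<^sub>R hs k)" for z
  have [measurable]: "\<phi> \<in> borel_measurable M"
    unfolding \<phi>_def by (rule borel_measurable_suminf_complete) measurable
  have "AE z in M. ennreal ((norm (\<phi> z))^2) \<le> (\<Sum>k. ennreal ((beta k * f k z)^2))"
    using AE
  proof eventually_elim
    case (elim z)
    have "(norm (\<phi> z))^2 \<le> (\<Sum>k. (beta k * f k z)^2)"
      unfolding \<phi>_def by (rule norm_suminf_onb_squared_le[OF onb elim])
    moreover have "(\<Sum>k. ennreal ((beta k * f k z)^2)) = ennreal (\<Sum>k. (beta k * f k z)^2)"
      by (rule suminf_ennreal2) (auto simp: elim)
    ultimately show ?case
      by (simp add: ennreal_leI)
  qed
  then have "(\<integral>\<^sup>+z. ennreal ((norm (\<phi> z))^2) \<partial>M) \<le> (\<integral>\<^sup>+z. (\<Sum>k. ennreal ((beta k * f k z)^2)) \<partial>M)"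
    by (rule nn_integral_mono_AE)
  then have "(\<integral>\<^sup>+z. ennreal ((norm (\<phi> z))^2) \<partial>M) < \<infinity>"
    using finite by (rule le_less_trans)
  then have "integrable M (\<lambda>z. (norm (\<phi> z))^2)"
    by (intro integrableI_nonneg) auto
  then show "(\<lambda>z. \<Sum>k. (beta k * f k z) *\<^sub>R hs k) \<in> L2H M"
    by (simp add: L2H_def \<phi>_def[symmetric])
qed

lemma phi_series_inner_sums:
  fixes hs :: "nat \<Rightarrow> 'h::{real_inner, complete_space}"
  assumes onb: "onb_padded hs" and summable: "summable (\<lambda>k. (beta k * f k)^2)"
  shows "(\<lambda>k. beta k * inner h (hs k) * f k) sums inner h (\<Sum>k. (beta k * f k) *\<^sub>R hs k)"
  using bounded_linear.sums[OF bounded_linear_inner_right summable_sums[OF summable_onb_series[OF onb summable]], of h]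
  by (simp add: mult_ac)

context
  fixes lam :: "'z measure" and model :: "'z measure set" and P :: "'z measure"
    and D :: "('z \<Rightarrow> real) \<Rightarrow> 'h::{real_inner, complete_space, second_countable_topology}"
    and hs :: "nat \<Rightarrow> 'h" and beta :: "nat \<Rightarrow> real"
  assumes P: "prob_space P" and D: "cont_linear_on P (tangent_space lam model P) D"
    and onb: "onb_padded hs" and beta: "summable (\<lambda>k. (beta k)^2)"
begin

lemma eff_infl_op_onb_bounded:
  obtains B where "\<And>k. eff_infl_op lam model P D (hs k) \<in> L2 P"
    "\<And>k. sqrt (L2_sqnorm P (eff_infl_op lam model P D (hs k))) \<le> B"
proof -
  obtain C where C: "C \<ge> 0" "\<And>s. s \<in> tangent_space lam model P \<Longrightarrow> norm (D s) \<le> C * sqrt (L2_sqnorm P s)"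
    using cont_linear_on_bound[OF D] by blast
  have "sqrt (L2_sqnorm P (eff_infl_op lam model P D (hs k))) \<le> C" for k
    using order_trans[OF eff_infl_op_norm_le[OF P D C] mult_left_le[OF onb_padded_norm_le_1[OF onb] C(1)]] .
  with that tangent_space_L2[OF eff_infl_op_tangent_space[OF P D]] show ?thesis
    by blast
qed

lemma phi_beta_L2H: "phi_beta lam model P D beta hs \<in> L2H P"
proof -
  obtain B where "\<And>k. eff_infl_op lam model P D (hs k) \<in> L2 P"
    "\<And>k. sqrt (L2_sqnorm P (eff_infl_op lam model P D (hs k))) \<le> B"
    by (rule eff_infl_op_onb_bounded) blast
  from onb_series_L2H(2)[OF onb this beta] show ?thesis
    by (simp add: phi_beta_def[abs_def])
qed

lemma eff_infl_op_Gamma_beta_comp_eqI: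
  assumes beta_le: "\<And>k. \<bar>beta k\<bar> \<le> 1" and \<psi>: "\<psi> \<in> tangent_space lam model P"
    and lim: "(\<lambda>n. L2_sqnorm P (\<lambda>z.
      (\<Sum>k<n. beta k * inner h (hs k) * eff_infl_op lam model P D (hs k) z) - \<psi> z)) \<longlonglongrightarrow> 0"
  shows "AE z in P. eff_infl_op lam model P (Gamma_beta beta hs \<circ> D) h z = \<psi> z"
proof (rule eff_infl_op_eqI[OF P _ \<psi>])
  show "cont_linear_on P (tangent_space lam model P) (Gamma_beta beta hs \<circ> D)"
    by (rule cont_linear_on_bounded_linear_comp[OF bounded_linear_Gamma_beta[where beta=beta, OF onb beta_le] D])
  show "inner ((Gamma_beta beta hs \<circ> D) s) h = (\<integral>z. s z * \<psi> z \<partial>P)"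
    if s: "s \<in> tangent_space lam model P" for s
  proof -
    have "(\<lambda>k. beta k * inner h (hs k) * inner (D s) (hs k)) sums (\<integral>z. s z * \<psi> z \<partial>P)"
      by (rule eff_infl_op_series_inner_sums[OF P D s tangent_space_L2[OF \<psi>] lim])
    moreover have "(\<lambda>k. beta k * inner h (hs k) * inner (D s) (hs k)) sums inner (Gamma_beta beta hs (D s)) h"
      using Gamma_beta_inner_sums[where beta=beta and x="D s" and y=h, OF onb beta_le]
      by (simp add: inner_commute mult_ac)
    ultimately show ?thesis
      by (simp add: sums_unique2)
  qed
qed

lemma is_eif_Gamma_beta_comp:
  assumes beta_le: "\<And>k. \<bar>beta k\<bar> \<le> 1"
  shows "is_eif lam model P (Gamma_beta beta hs \<circ> D) (phi_beta lam model P D beta hs)"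
  unfolding is_eif_def
proof
  fix h :: 'h
  interpret tangent: L2_closed_subspace P "tangent_space lam model P"
    by (rule L2_closed_subspace_tangent_space[OF P])
  define f where "f k = eff_infl_op lam model P D (hs k)" for k
  define a where "a k = beta k * inner h (hs k)" for k
  obtain B where f_L2: "\<And>k. f k \<in> L2 P" and f_bound: "\<And>k. sqrt (L2_sqnorm P (f k)) \<le> B"
    unfolding f_def by (rule eff_infl_op_onb_bounded) blast
  have sq_summable: "AE z in P. summable (\<lambda>k. (beta k * f k z)^2)"
    by (rule onb_series_L2H(1)[OF onb f_L2 f_bound beta])
  have "summable (\<lambda>k. \<bar>a k\<bar>)"
    unfolding a_def using beta by (rule summable_abs_mult_bessel[OF onb])
  then obtain \<psi> where \<psi>: "\<psi> \<in> L2 P"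
    and lim: "(\<lambda>n. L2_sqnorm P (\<lambda>z. (\<Sum>k<n. a k * f k z) - \<psi> z)) \<longlonglongrightarrow> 0"
    and \<psi>_sum: "AE z in P. summable (\<lambda>k. a k * f k z) \<longrightarrow> \<psi> z = (\<Sum>k. a k * f k z)"
    by (rule tangent.L2_series_limit[OF f_L2 f_bound])
  have "(\<lambda>z. \<Sum>k<n. a k * f k z) \<in> tangent_space lam model P" for n
    by (intro tangent.sum_mem) (simp add: f_def eff_infl_op_tangent_space[OF P D])
  with \<psi> have \<psi>_T: "\<psi> \<in> tangent_space lam model P"
    using lim by (rule tangent.limit_mem)
  have "AE z in P. eff_infl_op lam model P (Gamma_beta beta hs \<circ> D) h z = \<psi> z"
    using beta_le \<psi>_T lim[unfolded a_def f_def] by (rule eff_infl_op_Gamma_beta_comp_eqI)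
  moreover have "AE z in P. \<psi> z = inner h (phi_beta lam model P D beta hs z)"
    using \<psi>_sum sq_summable
  proof eventually_elim
    case (elim z)
    have "(\<lambda>k. beta k * inner h (hs k) * f k z) sums inner h (\<Sum>k. (beta k * f k z) *\<^sub>R hs k)"
      by (rule phi_series_inner_sums[OF onb elim(2)])
    then have "(\<lambda>k. a k * f k z) sums inner h (phi_beta lam model P D beta hs z)"
      by (simp add: a_def phi_beta_def f_def)
    with elim(1) show ?case
      by (simp add: sums_iff)
  qed
  ultimately show "AE z in P. eff_infl_op lam model P (Gamma_beta beta hs \<circ> D) h z
      = inner h (phi_beta lam model P D beta hs z)"
    by eventually_elim simp
qed

end

theorem lemma7:
  fixes lam :: "'z::polish_space measure"
    and model :: "'z measure set"
    and hs :: "nat \<Rightarrow> 'h::{real_inner, complete_space, second_countable_topology}"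
    and beta :: "nat \<Rightarrow> real"
    and nu :: "'z measure \<Rightarrow> 'h"
    and D :: "('z \<Rightarrow> real) \<Rightarrow> 'h"
    and P :: "'z measure"
  assumes "sigma_finite_measure lam"
    and "sets lam = sets borel"
    and "dominated_model lam model"
    and "onb_padded hs"
    and "summable (\<lambda>k. (beta k)^2)"
    and "\<forall>k. 0 \<le> beta k \<and> beta k \<le> 1"
    and "P \<in> model"
    and "pathwise_diff lam model nu P D"
  shows "pathwise_diff lam model (Gamma_beta beta hs \<circ> nu) P (Gamma_beta beta hs \<circ> D)
    \<and> is_eif lam model P (Gamma_beta beta hs \<circ> D) (phi_beta lam model P D beta hs)
    \<and> phi_beta lam model P D beta hs \<in> L2H P"
proof -
  have P: "prob_space P"
    using assms(3,7) by (auto simp: dominated_model_def)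
  have D: "cont_linear_on P (tangent_space lam model P) D"
    using assms(8) by (simp add: pathwise_diff_def)
  have beta_le: "\<bar>beta k\<bar> \<le> 1" for k
    using assms(6) by (simp add: abs_of_nonneg)
  show ?thesis
    using pathwise_diff_bounded_linear_comp[OF bounded_linear_Gamma_beta[where beta=beta, OF assms(4) beta_le] assms(8)]
      is_eif_Gamma_beta_comp[OF P D assms(4,5) beta_le] phi_beta_L2H[OF P D assms(4,5)]
    by blast
qed

end
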